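(* Let $\phi:[0,1]\to[0,1]$ be concave with $\phi(0)=0$, $\phi(1)=1$. For $X\in\mathcal{M}$ define \[ \|X\|_{TM_\phi}=\sup_{0<t<1}\left\{\frac{\phi(t)}{t}\int_0^t X^*(\omega)\,d\omega+\frac{\phi(t)-1}{t-1}\int_t^1 X^*(\omega)\,d\omega\right\}. \] Then $X\mapsto\|X\|_{TM_\phi}$ (restricted to $\mathcal{M}^+$) is a positive translation equivariant ri function norm with fundamental function $\phi$, and it is the smallest one: for every positive translation equivariant ri function norm $R$ with fundamental function $\phi$, \[ \|X\|_{M_\phi}\le\|X\|_{TM_\phi}\le R(|X|)\quad\text{for all } X\in\mathcal{M} \text{ with } R(|X|)<\infty, \] where $\|X\|_{M_\phi}=\sup_{0<t\le 1}\frac{\phi(t)}{t}\int_0^t X^*(\omega)\,d\omega$ is the Marcinkiewicz norm.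
   Context: $\Omega=[0,1]$ with Lebesgue measure $\mu$; $\mathcal{M}$ is the set of Lebesgue measurable functions on $\Omega$ and $\mathcal{M}^+$ those with values in $[0,\infty]$; (in)equalities hold $\mu$-a.e. A Banach function norm is $R:\mathcal{M}^+\to[0,\infty]$ with: $R(X)=0\iff X=0$, $R(\lambda X)=\lambda R(X)$ ($\lambda\ge0$), $R(X+Y)\le R(X)+R(Y)$; $0\le X\le Y\Rightarrow R(X)\le R(Y)$; $0\le X_n\uparrow X$ a.e. $\Rightarrow R(X_n)\uparrow R(X)$; for each measurable $E$, $R(\chi_E)<\infty$ and $\int_E X\,d\mu\le c_E R(X)$ for some $0<c_E<\infty$ depending only on $E,R$; and normalised $R(\chi_\Omega)=1$. It is rearrangement invariant (an ri function norm) if $R(X)=R(Y)$ whenever $\mu\{|X|>\lambda\}=\mu\{|Y|>\lambda\}$ for all $\lambda\ge0$. The decreasing rearrangement is $X^*(\omega)=\inf\{\lambda\ge0:\mu\{|X|>\lambda\}\le\omega\}$ for $\omega\in[0,1)$. The fundamental function of $R$ is $\phi_R(t)=R(\chi_E)$ for any $E$ with $\mu(E)=t$. $R$ is positive translation equivariant (PTE) if $R(X+c)=R(X)+c$ for all $X\in\mathcal{M}^+$ and $c\in\mathbb{R}$ with $X+c\ge0$. *)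

theory Defs
  imports "HOL-Analysis.Analysis"
begin

abbreviation Om :: "real measure" where
  "Om \<equiv> lebesgue_on {0..1}"

definition Mplus :: "(real \<Rightarrow> ennreal) set" where
  "Mplus = borel_measurable Om"

definition distr_fun :: "(real \<Rightarrow> ennreal) \<Rightarrow> real \<Rightarrow> ennreal" where
  "distr_fun X l = emeasure Om {x \<in> space Om. ennreal l < X x}"

definition rearr :: "(real \<Rightarrow> ennreal) \<Rightarrow> real \<Rightarrow> ennreal" where
  "rearr X w = Inf {l :: ennreal. emeasure Om {x \<in> space Om. l < X x} \<le> ennreal w}"

definition banach_function_norm :: "((real \<Rightarrow> ennreal) \<Rightarrow> ennreal) \<Rightarrow> bool" where
  "banach_function_norm R \<longleftrightarrow>
     (\<forall>X\<in>Mplus. R X = 0 \<longleftrightarrow> (AE x in Om. X x = 0)) \<and>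
     (\<forall>X\<in>Mplus. \<forall>c::real. c \<ge> 0 \<longrightarrow> R (\<lambda>x. ennreal c * X x) = ennreal c * R X) \<and>
     (\<forall>X\<in>Mplus. \<forall>Y\<in>Mplus. R (\<lambda>x. X x + Y x) \<le> R X + R Y) \<and>
     (\<forall>X\<in>Mplus. \<forall>Y\<in>Mplus. (AE x in Om. X x \<le> Y x) \<longrightarrow> R X \<le> R Y) \<and>
     (\<forall>Xs X. (\<forall>n. Xs n \<in> Mplus) \<longrightarrow> X \<in> Mplus \<longrightarrow>
        (AE x in Om. incseq (\<lambda>n. Xs n x) \<and> (\<lambda>n. Xs n x) \<longlonglongrightarrow> X x) \<longrightarrow>
        (\<lambda>n. R (Xs n)) \<longlonglongrightarrow> R X) \<and>
     (\<forall>E\<in>sets Om. R (indicator E) < \<infinity> \<and>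
        (\<exists>c::real. 0 < c \<and> (\<forall>X\<in>Mplus. (\<integral>\<^sup>+ x\<in>E. X x \<partial>Om) \<le> ennreal c * R X))) \<and>
     R (indicator (space Om)) = 1"

definition rearrangement_invariant :: "((real \<Rightarrow> ennreal) \<Rightarrow> ennreal) \<Rightarrow> bool" where
  "rearrangement_invariant R \<longleftrightarrow>
     (\<forall>X\<in>Mplus. \<forall>Y\<in>Mplus. (\<forall>l::real. l \<ge> 0 \<longrightarrow> distr_fun X l = distr_fun Y l) \<longrightarrow> R X = R Y)"

definition ri_function_norm :: "((real \<Rightarrow> ennreal) \<Rightarrow> ennreal) \<Rightarrow> bool" where
  "ri_function_norm R \<longleftrightarrow> banach_function_norm R \<and> rearrangement_invariant R"

definition has_fundamental_function :: "((real \<Rightarrow> ennreal) \<Rightarrow> ennreal) \<Rightarrow> (real \<Rightarrow> real) \<Rightarrow> bool" where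
  "has_fundamental_function R \<phi> \<longleftrightarrow>
     (\<forall>E\<in>sets Om. R (indicator E) = ennreal (\<phi> (measure Om E)))"

text \<open>Positive translation equivariance: R(X+c) = R(X)+c whenever X+c >= 0
  (split into c >= 0 and c = -d with X >= d a.e.).\<close>
definition PTE :: "((real \<Rightarrow> ennreal) \<Rightarrow> ennreal) \<Rightarrow> bool" where
  "PTE R \<longleftrightarrow>
     (\<forall>X\<in>Mplus. \<forall>c::real. c \<ge> 0 \<longrightarrow> R (\<lambda>x. X x + ennreal c) = R X + ennreal c) \<and>
     (\<forall>X\<in>Mplus. \<forall>d::real. d \<ge> 0 \<longrightarrow> (AE x in Om. ennreal d \<le> X x) \<longrightarrow>
        R (\<lambda>x. X x - ennreal d) = R X - ennreal d)"

definition TM_norm :: "(real \<Rightarrow> real) \<Rightarrow> (real \<Rightarrow> ennreal) \<Rightarrow> ennreal" where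
  "TM_norm \<phi> X = (SUP t\<in>{0<..<1}.
      ennreal (\<phi> t / t) * (\<integral>\<^sup>+ w\<in>{0..t}. rearr X w \<partial>lborel)
    + ennreal ((\<phi> t - 1) / (t - 1)) * (\<integral>\<^sup>+ w\<in>{t..1}. rearr X w \<partial>lborel))"

definition M_norm :: "(real \<Rightarrow> real) \<Rightarrow> (real \<Rightarrow> ennreal) \<Rightarrow> ennreal" where
  "M_norm \<phi> X = (SUP t\<in>{0<..1}. ennreal (\<phi> t / t) * (\<integral>\<^sup>+ w\<in>{0..t}. rearr X w \<partial>lborel))"

end

(* For 0 < t < 1 the expression under the supremum is phi(t) A + (1 - phi(t)) B, where A and B
   are the averages of X* over [0,t] and [t,1].  Homogeneity, monotonicity, the Fatou property
   and rearrangement invariance pass from X* to this expression; subadditivity follows from the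
   Hardy-Littlewood subadditivity of the integral of X* over [0,t], translation equivariance
   from (X + c)* = X* + c, and the value phi(mu E) on indicators from concavity of phi.

   For minimality, let R be a PTE ri norm with fundamental function phi.  The function equal to
   A on [0,t) and to B <= A on [t,1) is (A - B) chi_[0,t) + B, so R assigns it the value
   phi(t) A + (1 - phi(t)) B.  Split [0,t) and [t,1) into n equal cells and let S be the step
   function taking the value of X* at the right end of each cell, so S <= X*.  The n cyclic
   shifts of the cell values are equimeasurable with S, and their mean is the two-valued
   function whose values A_n, B_n are lower Riemann sums of X*; hence R(X) >= R(S) >=
   phi(t) A_n + (1 - phi(t)) B_n.  The lower and upper Riemann sums differ by at most X*(0)/n,
   which gives the claim after truncating X* at a finite level. *)
theory Submission
  imports Defs
begin

section \<open>Lebesgue measure on [0,1]\<close>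

lemma finite_measure_Om: "finite_measure Om"
  by (rule finite_measure_lebesgue_on) simp

lemma emeasure_Om_space: "emeasure Om {0..1} = 1"
  by (simp add: emeasure_restrict_space)

lemma measure_Om_le_1: "measure Om E \<le> 1"
proof -
  have "measure Om E \<le> measure Om (space Om)"
    by (rule finite_measure.bounded_measure[OF finite_measure_Om])
  then show ?thesis
    using emeasure_Om_space by (simp add: measure_def)
qed

lemma emeasure_Om_eq_lborel: "A \<in> sets borel \<Longrightarrow> A \<subseteq> {0..1} \<Longrightarrow> emeasure Om A = emeasure lborel A"
  by (simp add: emeasure_restrict_space)

lemma borel_measurable_Om: "f \<in> borel_measurable borel \<Longrightarrow> f \<in> borel_measurable Om"
  by (simp add: measurable_completion measurable_restrict_space1 measurable_lborel1)

lemma nn_integral_Om: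
  "g \<in> borel_measurable borel \<Longrightarrow> (\<integral>\<^sup>+x. g x \<partial>Om) = (\<integral>\<^sup>+x\<in>{0..1}. g x \<partial>lborel)"
  by (simp add: nn_integral_restrict_space nn_integral_completion)

lemma AE_Om_neq: "AE x in Om. x \<noteq> c"
proof -
  have "AE x in lebesgue. x \<noteq> c" by (rule AE_completion[OF AE_lborel_singleton])
  then show ?thesis by (subst AE_restrict_space_iff) (auto elim: eventually_mono)
qed

lemma nn_integral_interval_split:
  fixes F :: "real \<Rightarrow> ennreal"
  assumes F: "F \<in> borel_measurable borel" and t: "a \<le> t" "t \<le> b"
  shows "(\<integral>\<^sup>+w\<in>{a..b}. F w \<partial>lborel) = (\<integral>\<^sup>+w\<in>{a..t}. F w \<partial>lborel) + (\<integral>\<^sup>+w\<in>{t..b}. F w \<partial>lborel)"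
proof -
  have "(\<integral>\<^sup>+w\<in>{a..b}. F w \<partial>lborel) = (\<integral>\<^sup>+w. F w * indicator {a..t} w + F w * indicator {t..b} w \<partial>lborel)"
  proof (rule nn_integral_cong_AE)
    show "AE w in lborel. F w * indicator {a..b} w = F w * indicator {a..t} w + F w * indicator {t..b} w"
      using AE_lborel_singleton[of t]
      by eventually_elim (use t in \<open>auto simp: indicator_def\<close>)
  qed
  also have "\<dots> = (\<integral>\<^sup>+w\<in>{a..t}. F w \<partial>lborel) + (\<integral>\<^sup>+w\<in>{t..b}. F w \<partial>lborel)"
    using F by (intro nn_integral_add) auto
  finally show ?thesis .
qed

lemma nn_integral_interval_ge_const:
  fixes F :: "real \<Rightarrow> ennreal"
  assumes "\<And>w. w \<in> {a..b} \<Longrightarrow> c \<le> F w" and "a \<le> b"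
  shows "c * ennreal (b - a) \<le> (\<integral>\<^sup>+w\<in>{a..b}. F w \<partial>lborel)"
proof -
  have "c * ennreal (b - a) = (\<integral>\<^sup>+w. c * indicator {a..b} w \<partial>lborel)"
    using assms by (simp add: nn_integral_cmult_indicator)
  also have "\<dots> \<le> (\<integral>\<^sup>+w\<in>{a..b}. F w \<partial>lborel)"
    using assms by (intro nn_integral_mono) (auto simp: indicator_def)
  finally show ?thesis .
qed

lemma nn_integral_interval_le_const:
  fixes F :: "real \<Rightarrow> ennreal"
  assumes "\<And>w. w \<in> {a..b} \<Longrightarrow> F w \<le> c" and "a \<le> b"
  shows "(\<integral>\<^sup>+w\<in>{a..b}. F w \<partial>lborel) \<le> c * ennreal (b - a)"
proof -
  have "(\<integral>\<^sup>+w\<in>{a..b}. F w \<partial>lborel) \<le> (\<integral>\<^sup>+w. c * indicator {a..b} w \<partial>lborel)"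
    using assms by (intro nn_integral_mono) (auto simp: indicator_def)
  also have "\<dots> = c * ennreal (b - a)"
    using assms by (simp add: nn_integral_cmult_indicator)
  finally show ?thesis .
qed

lemma nn_integral_interval_add_const:
  fixes F :: "real \<Rightarrow> ennreal"
  assumes F: "F \<in> borel_measurable borel" and "a \<le> b"
  shows "(\<integral>\<^sup>+w\<in>{a..b}. F w + ennreal c \<partial>lborel) = (\<integral>\<^sup>+w\<in>{a..b}. F w \<partial>lborel) + ennreal c * ennreal (b - a)"
  using assms by (simp add: distrib_right nn_integral_add nn_integral_cmult_indicator)

lemma nn_integral_interval_cong_AE:
  fixes F G :: "real \<Rightarrow> ennreal"
  assumes "\<And>w. w \<in> {a..b} \<Longrightarrow> w \<noteq> b \<Longrightarrow> F w = G w"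
  shows "(\<integral>\<^sup>+w\<in>{a..b}. F w \<partial>lborel) = (\<integral>\<^sup>+w\<in>{a..b}. G w \<partial>lborel)"
  using AE_lborel_singleton[of b] assms
  by (intro nn_integral_cong_AE) (auto elim!: eventually_mono simp: indicator_def)

section \<open>The decreasing rearrangement\<close>

definition distr_fun_enn :: "(real \<Rightarrow> ennreal) \<Rightarrow> ennreal \<Rightarrow> ennreal" where
  "distr_fun_enn X l = emeasure Om {x \<in> space Om. l < X x}"

lemma distr_fun_enn_le_1: "distr_fun_enn X l \<le> 1"
proof -
  have "distr_fun_enn X l \<le> emeasure Om (space Om)"
    unfolding distr_fun_enn_def by (rule emeasure_space)
  then show ?thesis by (simp add: emeasure_Om_space)
qed

lemma distr_fun_enn_top [simp]: "distr_fun_enn X top = 0"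
  unfolding distr_fun_enn_def by simp

lemma sets_Om_upper_level: "X \<in> Mplus \<Longrightarrow> {x \<in> space Om. l < X x} \<in> sets Om"
  unfolding Mplus_def by measurable

lemma distr_fun_enn_antimono: "X \<in> Mplus \<Longrightarrow> l \<le> l' \<Longrightarrow> distr_fun_enn X l' \<le> distr_fun_enn X l"
  unfolding distr_fun_enn_def by (intro emeasure_mono sets_Om_upper_level) auto

lemma distr_fun_enn_mono:
  assumes "Y \<in> Mplus" and "AE x in Om. X x \<le> Y x"
  shows "distr_fun_enn X l \<le> distr_fun_enn Y l"
  unfolding distr_fun_enn_def
  by (rule emeasure_mono_AE)
    (use assms sets_Om_upper_level[OF assms(1)] in \<open>auto elim: eventually_mono intro: less_le_trans\<close>)

lemma distr_fun_enn_cong_AE: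
  assumes "X \<in> Mplus" "Y \<in> Mplus" "AE x in Om. X x = Y x"
  shows "distr_fun_enn X l = distr_fun_enn Y l"
  using assms by (intro antisym distr_fun_enn_mono) (auto elim: eventually_mono)

lemma distr_fun_enn_eq_if_distr_fun_eq:
  assumes "\<forall>l::real. l \<ge> 0 \<longrightarrow> distr_fun X l = distr_fun Y l"
  shows "distr_fun_enn X l = distr_fun_enn Y l"
  using assms unfolding distr_fun_def distr_fun_enn_def by (cases l) auto

lemma ennreal_less_iff_ex_Suc:
  assumes "0 \<le> r"
  shows "ennreal r < y \<longleftrightarrow> (\<exists>m. ennreal (r + 1 / Suc m) < y)"
proof
  assume "ennreal r < y"
  then show "\<exists>m. ennreal (r + 1 / Suc m) < y"
  proof (cases y)
    case (real s)
    with \<open>ennreal r < y\<close> assms have "r < s" by (simp add: ennreal_less_iff)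
    then obtain m where "1 / real (Suc m) < s - r"
      by (metis diff_gt_0_iff_gt nat_approx_posE)
    then have "ennreal (r + 1 / Suc m) < y"
      using real assms by (simp add: ennreal_less_iff del: ennreal_plus)
    then show ?thesis ..
  qed simp
qed (use assms in \<open>auto elim!: le_less_trans[rotated] intro!: ennreal_leI\<close>)

lemma distr_fun_enn_right_continuous:
  assumes X: "X \<in> Mplus" and l: "l < top" and w: "ennreal w < distr_fun_enn X l"
  shows "\<exists>l'>l. ennreal w < distr_fun_enn X l'"
proof -
  obtain r where r: "l = ennreal r" "0 \<le> r" using l by (cases l) auto
  define A where "A m = {x \<in> space Om. ennreal (r + 1 / Suc m) < X x}" for m :: nat
  have A_sets: "range A \<subseteq> sets Om" unfolding A_def using sets_Om_upper_level[OF X] by auto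
  have "incseq A"
  proof (rule incseq_SucI)
    fix m
    have "ennreal (r + 1 / Suc (Suc m)) \<le> ennreal (r + 1 / Suc m)"
      by (intro ennreal_leI) (simp add: frac_le)
    then show "A m \<subseteq> A (Suc m)" unfolding A_def by (auto intro: le_less_trans)
  qed
  moreover have "(\<Union>m. A m) = {x \<in> space Om. l < X x}"
    unfolding A_def r ennreal_less_iff_ex_Suc[OF r(2)] by auto
  ultimately have "(SUP m. emeasure Om (A m)) = distr_fun_enn X l"
    unfolding distr_fun_enn_def using SUP_emeasure_incseq[OF A_sets] by simp
  with w obtain m where "ennreal w < emeasure Om (A m)"
    by (metis less_SUP_iff)
  moreover have "emeasure Om (A m) = distr_fun_enn X (ennreal (r + 1 / Suc m))"
    unfolding A_def distr_fun_enn_def ..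
  moreover have "l < ennreal (r + 1 / Suc m)"
    using r by (simp add: ennreal_less_iff del: ennreal_plus)
  ultimately show ?thesis by (intro exI[of _ "ennreal (r + 1 / Suc m)"]) simp
qed

lemma rearr_antimono: "antimono (rearr X)"
  unfolding rearr_def
  by (intro antimonoI Inf_superset_mono) (auto intro: order_trans ennreal_leI)

lemma rearr_le: "distr_fun_enn X l \<le> ennreal w \<Longrightarrow> rearr X w \<le> l"
  unfolding rearr_def distr_fun_enn_def by (intro Inf_lower) simp

lemma rearr_mono: "(\<And>l. distr_fun_enn X l \<le> distr_fun_enn Y l) \<Longrightarrow> rearr X w \<le> rearr Y w"
  unfolding rearr_def distr_fun_enn_def by (intro Inf_superset_mono) (auto intro: order_trans)

lemma rearr_cong: "(\<And>l. distr_fun_enn X l = distr_fun_enn Y l) \<Longrightarrow> rearr X = rearr Y"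
  unfolding rearr_def distr_fun_enn_def by simp

lemma less_rearr_iff:
  assumes X: "X \<in> Mplus"
  shows "l < rearr X w \<longleftrightarrow> ennreal w < distr_fun_enn X l"
proof
  assume "l < rearr X w"
  then show "ennreal w < distr_fun_enn X l"
    using rearr_le[of X l w] by (auto simp: not_less[symmetric])
next
  assume w: "ennreal w < distr_fun_enn X l"
  then have "l < top" by (cases "l = top") (auto simp: less_top)
  then obtain l' where l': "l < l'" "ennreal w < distr_fun_enn X l'"
    using distr_fun_enn_right_continuous[OF X _ w] by blast
  have "l' \<le> rearr X w" unfolding rearr_def
  proof (rule Inf_greatest)
    fix m assume "m \<in> {l. emeasure Om {x \<in> space Om. l < X x} \<le> ennreal w}"
    then have "distr_fun_enn X m \<le> ennreal w" unfolding distr_fun_enn_def by simp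
    with l' show "l' \<le> m"
      using distr_fun_enn_antimono[OF X, of m l'] by (meson linorder_le_cases not_le order_trans)
  qed
  with l' show "l < rearr X w" by auto
qed

lemma rearr_eqI: "X \<in> Mplus \<Longrightarrow> (\<And>l. ennreal w < distr_fun_enn X l \<longleftrightarrow> l < a) \<Longrightarrow> rearr X w = a"
  by (metis less_rearr_iff linorder_neqE less_irrefl)

lemma borel_measurable_rearr: "X \<in> Mplus \<Longrightarrow> rearr X \<in> borel_measurable borel"
  by (rule borel_measurableI_greater) (simp add: less_rearr_iff)

lemma rearr_in_Mplus: "X \<in> Mplus \<Longrightarrow> rearr X \<in> Mplus"
  using borel_measurable_Om[OF borel_measurable_rearr] by (simp add: Mplus_def)

lemma distr_fun_enn_rearr:
  assumes X: "X \<in> Mplus" shows "distr_fun_enn (rearr X) l = distr_fun_enn X l"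
proof -
  obtain d where d: "distr_fun_enn X l = ennreal d" "0 \<le> d" "d \<le> 1"
    using distr_fun_enn_le_1[of X l] by (cases "distr_fun_enn X l") (auto simp: top_unique)
  have "{x \<in> space Om. l < rearr X x} = {0..<d}"
    using d by (auto simp: less_rearr_iff[OF X] ennreal_less_iff)
  then have "distr_fun_enn (rearr X) l = emeasure Om {0..<d}"
    unfolding distr_fun_enn_def by simp
  also have "\<dots> = emeasure lborel {0..<d}"
    using d by (intro emeasure_Om_eq_lborel) auto
  finally show ?thesis using d by simp
qed

lemma distr_eq_if_distr_fun_enn_eq:
  assumes X: "X \<in> Mplus" and Y: "Y \<in> Mplus" and eq: "\<And>l. distr_fun_enn X l = distr_fun_enn Y l"
  shows "distr Om borel X = distr Om borel Y"
proof (rule measure_eqI_generator_eq[where E="insert UNIV (range greaterThan)" and \<Omega>=UNIV and A="\<lambda>_. UNIV"])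
  have "{a<..} \<inter> {b<..} = {max a b<..}" for a b :: ennreal by auto
  then show "Int_stable (insert UNIV (range greaterThan :: ennreal set set))"
    unfolding Int_stable_def by auto
  have "sigma_sets UNIV (insert UNIV (range greaterThan)) = sigma_sets (UNIV :: ennreal set) (range greaterThan)"
    by (rule sigma_sets_eqI) (auto intro: sigma_sets_top)
  then show "sets (distr Om borel X) = sigma_sets UNIV (insert UNIV (range greaterThan))"
    and "sets (distr Om borel Y) = sigma_sets UNIV (insert UNIV (range greaterThan))"
    by (simp_all add: borel_Ioi)
  show "emeasure (distr Om borel X) UNIV \<noteq> \<infinity>"
    using X unfolding Mplus_def by (simp add: emeasure_distr emeasure_Om_space)
  fix A assume "A \<in> insert UNIV (range greaterThan :: ennreal set set)"
  moreover have "emeasure (distr Om borel Z) {l<..} = distr_fun_enn Z l" if "Z \<in> Mplus" for Z l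
    using that unfolding Mplus_def distr_fun_enn_def
    by (simp add: emeasure_distr vimage_def Int_def conj_commute)
  ultimately show "emeasure (distr Om borel X) A = emeasure (distr Om borel Y) A"
    using X Y eq unfolding Mplus_def by (auto simp: emeasure_distr)
qed auto

lemma nn_integral_comp_rearr:
  assumes X: "X \<in> Mplus" and h: "h \<in> borel_measurable borel"
  shows "(\<integral>\<^sup>+x. h (X x) \<partial>Om) = (\<integral>\<^sup>+w\<in>{0..1}. h (rearr X w) \<partial>lborel)"
proof -
  have "(\<integral>\<^sup>+x. h (X x) \<partial>Om) = integral\<^sup>N (distr Om borel X) h"
    using X h unfolding Mplus_def by (simp add: nn_integral_distr)
  also have "\<dots> = integral\<^sup>N (distr Om borel (rearr X)) h"
    using distr_eq_if_distr_fun_enn_eq[OF X rearr_in_Mplus[OF X]] distr_fun_enn_rearr[OF X] by simp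
  also have "\<dots> = (\<integral>\<^sup>+x. h (rearr X x) \<partial>Om)"
    using rearr_in_Mplus[OF X] h unfolding Mplus_def by (simp add: nn_integral_distr)
  also have "\<dots> = (\<integral>\<^sup>+w\<in>{0..1}. h (rearr X w) \<partial>lborel)"
    by (intro nn_integral_Om measurable_compose[OF borel_measurable_rearr[OF X] h])
  finally show ?thesis .
qed

lemma nn_integral_rearr: "X \<in> Mplus \<Longrightarrow> (\<integral>\<^sup>+x. X x \<partial>Om) = (\<integral>\<^sup>+w\<in>{0..1}. rearr X w \<partial>lborel)"
  using nn_integral_comp_rearr[of X "\<lambda>x. x"] by simp

lemma rearr_zero: "rearr (\<lambda>x. 0) w = 0"
  using rearr_le[of "\<lambda>x. 0" 0 w] by (simp add: distr_fun_enn_def)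

lemma rearr_indicator:
  assumes E: "E \<in> sets Om" and w: "0 \<le> w"
  shows "rearr (indicator E) w = indicator {..<measure Om E} w"
proof (rule rearr_eqI)
  show I: "indicator E \<in> Mplus" unfolding Mplus_def using E by simp
  have E_sub: "E \<subseteq> {0..1}" using sets.sets_into_space[OF E] by simp
  fix l :: ennreal
  have "distr_fun_enn (indicator E) l = (if l < 1 then ennreal (measure Om E) else 0)"
  proof (cases "l < 1")
    case True
    then have "{x \<in> space Om. l < indicator E x} = E" using E_sub by (auto simp: indicator_def)
    then show ?thesis
      using True finite_measure.emeasure_eq_measure[OF finite_measure_Om] by (simp add: distr_fun_enn_def)
  next
    case False
    then have "{x \<in> space Om. l < indicator E x} = {}"
      by (auto simp: indicator_def not_less intro: order_trans)
    with False show ?thesis unfolding distr_fun_enn_def by (simp only:) simp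
  qed
  then show "ennreal w < distr_fun_enn (indicator E) l \<longleftrightarrow> l < indicator {..<measure Om E} w"
    using w by (auto simp: indicator_def ennreal_less_iff)
qed

lemma rearr_add_const:
  assumes X: "X \<in> Mplus" and c: "0 \<le> c" and w: "0 \<le> w" "w < 1"
  shows "rearr (\<lambda>x. X x + ennreal c) w = rearr X w + ennreal c"
proof (rule rearr_eqI)
  show "(\<lambda>x. X x + ennreal c) \<in> Mplus" using X unfolding Mplus_def by measurable
  fix l :: ennreal
  show "ennreal w < distr_fun_enn (\<lambda>x. X x + ennreal c) l \<longleftrightarrow> l < rearr X w + ennreal c"
  proof (cases "l < ennreal c")
    case True
    then have "{x \<in> space Om. l < X x + ennreal c} = space Om"
      by (auto intro: less_le_trans add_increasing)
    then have "distr_fun_enn (\<lambda>x. X x + ennreal c) l = 1"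
      unfolding distr_fun_enn_def using emeasure_Om_space by simp
    with True w show ?thesis by (auto simp: ennreal_less_iff intro: less_le_trans add_increasing)
  next
    case False
    show ?thesis
    proof (cases l)
      case (real r)
      with False c have "c \<le> r" by (simp add: ennreal_less_iff)
      then have shift: "ennreal r < a + ennreal c \<longleftrightarrow> ennreal (r - c) < a" for a
        using c by (cases a) (auto simp: ennreal_less_iff simp flip: ennreal_plus)
      have "distr_fun_enn (\<lambda>x. X x + ennreal c) l = distr_fun_enn X (ennreal (r - c))"
        unfolding distr_fun_enn_def real shift ..
      then show ?thesis unfolding real shift less_rearr_iff[OF X] by simp
    qed simp
  qed
qed

lemma rearr_mult_const:
  assumes X: "X \<in> Mplus" and c: "0 < c"
  shows "rearr (\<lambda>x. ennreal c * X x) w = ennreal c * rearr X w"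
proof (rule rearr_eqI)
  show "(\<lambda>x. ennreal c * X x) \<in> Mplus" using X unfolding Mplus_def by measurable
  have c0: "ennreal c \<noteq> 0" "ennreal c < top" using c by auto
  fix l :: ennreal
  have "distr_fun_enn (\<lambda>x. ennreal c * X x) l = distr_fun_enn X (l / ennreal c)"
    unfolding distr_fun_enn_def using divide_less_ennreal[OF c0] by (simp add: mult.commute)
  then show "ennreal w < distr_fun_enn (\<lambda>x. ennreal c * X x) l \<longleftrightarrow> l < ennreal c * rearr X w"
    using less_rearr_iff[OF X, of "l / ennreal c" w] divide_less_ennreal[OF c0]
    by (simp add: mult.commute)
qed

lemma distr_fun_enn_SUP:
  fixes Xs :: "nat \<Rightarrow> real \<Rightarrow> ennreal"
  assumes Xs: "\<And>n. Xs n \<in> Mplus" and inc: "\<And>x. incseq (\<lambda>n. Xs n x)"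
  shows "distr_fun_enn (\<lambda>x. SUP n. Xs n x) l = (SUP n. distr_fun_enn (Xs n) l)"
proof -
  define A where "A n = {x \<in> space Om. l < Xs n x}" for n
  have "range A \<subseteq> sets Om" unfolding A_def using sets_Om_upper_level[OF Xs] by auto
  moreover have "incseq A"
    unfolding A_def incseq_def using inc by (auto simp: incseq_def intro: less_le_trans)
  moreover have "(\<Union>n. A n) = {x \<in> space Om. l < (SUP n. Xs n x)}"
    unfolding A_def by (auto simp: less_SUP_iff)
  ultimately show ?thesis
    unfolding distr_fun_enn_def using SUP_emeasure_incseq[of A Om] by (simp add: A_def)
qed

lemma rearr_SUP:
  fixes Xs :: "nat \<Rightarrow> real \<Rightarrow> ennreal"
  assumes Xs: "\<And>n. Xs n \<in> Mplus" and inc: "\<And>x. incseq (\<lambda>n. Xs n x)"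
  shows "rearr (\<lambda>x. SUP n. Xs n x) w = (SUP n. rearr (Xs n) w)"
proof (rule rearr_eqI)
  show "(\<lambda>x. SUP n. Xs n x) \<in> Mplus" using Xs unfolding Mplus_def by measurable
  show "ennreal w < distr_fun_enn (\<lambda>x. SUP n. Xs n x) l \<longleftrightarrow> l < (SUP n. rearr (Xs n) w)" for l
    unfolding distr_fun_enn_SUP[OF Xs inc] less_SUP_iff less_rearr_iff[OF Xs] ..
qed

text \<open>Hardy--Littlewood: the integral of X* over [0,t] is the minimum over c of
  c t + \<integral>max 0 (X - c), attained at c = X*(t); hence it is subadditive in X.\<close>

lemma nn_integral_rearr_le_level:
  assumes X: "X \<in> Mplus" and t: "0 \<le> t" "t \<le> 1"
  shows "(\<integral>\<^sup>+w\<in>{0..t}. rearr X w \<partial>lborel) \<le> ennreal c * ennreal t + (\<integral>\<^sup>+x. X x - ennreal c \<partial>Om)"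
proof -
  have G: "(\<lambda>w. rearr X w - ennreal c) \<in> borel_measurable borel"
    using borel_measurable_rearr[OF X] by measurable
  have "(\<integral>\<^sup>+w\<in>{0..t}. rearr X w \<partial>lborel)
      \<le> (\<integral>\<^sup>+w. ennreal c * indicator {0..t} w + (rearr X w - ennreal c) * indicator {0..t} w \<partial>lborel)"
    by (intro nn_integral_mono) (auto simp: indicator_def add_diff_self_ennreal)
  also have "\<dots> = ennreal c * ennreal t + (\<integral>\<^sup>+w\<in>{0..t}. rearr X w - ennreal c \<partial>lborel)"
    using G t by (subst nn_integral_add) (auto simp: nn_integral_cmult_indicator)
  also have "(\<integral>\<^sup>+w\<in>{0..t}. rearr X w - ennreal c \<partial>lborel) \<le> (\<integral>\<^sup>+w\<in>{0..1}. rearr X w - ennreal c \<partial>lborel)"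
    using t by (intro nn_integral_mono) (auto simp: indicator_def)
  also have "\<dots> = (\<integral>\<^sup>+x. X x - ennreal c \<partial>Om)"
    using nn_integral_comp_rearr[OF X, of "\<lambda>x. x - ennreal c"] by simp
  finally show ?thesis by (simp add: add_left_mono)
qed

lemma nn_integral_rearr_eq_level:
  assumes X: "X \<in> Mplus" and t: "0 \<le> t" "t \<le> 1" and c: "rearr X t = ennreal c"
  shows "(\<integral>\<^sup>+w\<in>{0..t}. rearr X w \<partial>lborel) = ennreal c * ennreal t + (\<integral>\<^sup>+x. X x - ennreal c \<partial>Om)"
proof -
  have G: "(\<lambda>w. rearr X w - ennreal c) \<in> borel_measurable borel"
    using borel_measurable_rearr[OF X] by measurable
  have "(\<integral>\<^sup>+w\<in>{0..t}. rearr X w \<partial>lborel)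
      = (\<integral>\<^sup>+w. ennreal c * indicator {0..t} w + (rearr X w - ennreal c) * indicator {0..t} w \<partial>lborel)"
    using c antimonoD[OF rearr_antimono, of _ t X]
    by (intro nn_integral_cong) (auto simp: indicator_def add_diff_self_ennreal)
  also have "\<dots> = ennreal c * ennreal t + (\<integral>\<^sup>+w\<in>{0..t}. rearr X w - ennreal c \<partial>lborel)"
    using G t by (subst nn_integral_add) (auto simp: nn_integral_cmult_indicator)
  also have "(\<integral>\<^sup>+w\<in>{t..1}. rearr X w - ennreal c \<partial>lborel) = (\<integral>\<^sup>+(w::real). 0 \<partial>lborel)"
    using c antimonoD[OF rearr_antimono, of t _ X]
    by (intro nn_integral_cong)
      (auto simp: indicator_def diff_eq_0_iff_ennreal intro: le_less_trans[OF _ ennreal_less_top])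
  then have "(\<integral>\<^sup>+w\<in>{0..t}. rearr X w - ennreal c \<partial>lborel) = (\<integral>\<^sup>+w\<in>{0..1}. rearr X w - ennreal c \<partial>lborel)"
    using nn_integral_interval_split[OF G t] by simp
  also have "\<dots> = (\<integral>\<^sup>+x. X x - ennreal c \<partial>Om)"
    using nn_integral_comp_rearr[OF X, of "\<lambda>x. x - ennreal c"] by simp
  finally show ?thesis .
qed

lemma nn_integral_rearr_add_le:
  assumes X: "X \<in> Mplus" and Y: "Y \<in> Mplus" and t: "0 < t" "t \<le> 1"
  shows "(\<integral>\<^sup>+w\<in>{0..t}. rearr (\<lambda>x. X x + Y x) w \<partial>lborel)
    \<le> (\<integral>\<^sup>+w\<in>{0..t}. rearr X w \<partial>lborel) + (\<integral>\<^sup>+w\<in>{0..t}. rearr Y w \<partial>lborel)"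
proof (cases "rearr X t = top \<or> rearr Y t = top")
  case True
  have "top * ennreal t \<le> (\<integral>\<^sup>+w\<in>{0..t}. rearr Z w \<partial>lborel)" if "rearr Z t = top" for Z
    using that t antimonoD[OF rearr_antimono, of _ t Z] nn_integral_interval_ge_const[of 0 t top "rearr Z"]
    by auto
  with True t show ?thesis by (auto simp: ennreal_top_mult top_unique)
next
  case False
  then obtain c1 c2 where c: "0 \<le> c1" "rearr X t = ennreal c1" "0 \<le> c2" "rearr Y t = ennreal c2"
    by (metis ennreal_cases)
  have "(\<integral>\<^sup>+w\<in>{0..t}. rearr (\<lambda>x. X x + Y x) w \<partial>lborel)
      \<le> ennreal (c1 + c2) * ennreal t + (\<integral>\<^sup>+x. X x + Y x - ennreal (c1 + c2) \<partial>Om)"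
    using X Y t unfolding Mplus_def by (intro nn_integral_rearr_le_level) (auto simp: Mplus_def)
  also have "(\<integral>\<^sup>+x. X x + Y x - ennreal (c1 + c2) \<partial>Om) \<le> (\<integral>\<^sup>+x. (X x - ennreal c1) + (Y x - ennreal c2) \<partial>Om)"
  proof (intro nn_integral_mono)
    fix x
    have "X x + Y x \<le> (ennreal c1 + (X x - ennreal c1)) + (ennreal c2 + (Y x - ennreal c2))"
      by (intro add_mono) (auto simp: add_diff_self_ennreal)
    then show "X x + Y x - ennreal (c1 + c2) \<le> (X x - ennreal c1) + (Y x - ennreal c2)"
      using c by (simp add: ennreal_minus_le_iff add_ac)
  qed
  also have "\<dots> = (\<integral>\<^sup>+x. X x - ennreal c1 \<partial>Om) + (\<integral>\<^sup>+x. Y x - ennreal c2 \<partial>Om)"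
    using X Y unfolding Mplus_def by (intro nn_integral_add) auto
  also have "ennreal (c1 + c2) * ennreal t + ((\<integral>\<^sup>+x. X x - ennreal c1 \<partial>Om) + (\<integral>\<^sup>+x. Y x - ennreal c2 \<partial>Om))
      = (ennreal c1 * ennreal t + (\<integral>\<^sup>+x. X x - ennreal c1 \<partial>Om)) + (ennreal c2 * ennreal t + (\<integral>\<^sup>+x. Y x - ennreal c2 \<partial>Om))"
    using c by (simp add: distrib_right add_ac)
  also have "\<dots> = (\<integral>\<^sup>+w\<in>{0..t}. rearr X w \<partial>lborel) + (\<integral>\<^sup>+w\<in>{0..t}. rearr Y w \<partial>lborel)"
    using nn_integral_rearr_eq_level[OF X _ _ c(2)] nn_integral_rearr_eq_level[OF Y _ _ c(4)] t by simp
  finally show ?thesis by (simp add: add_left_mono)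
qed

section \<open>The functional TM\<close>

definition TM_at :: "(real \<Rightarrow> real) \<Rightarrow> (real \<Rightarrow> ennreal) \<Rightarrow> real \<Rightarrow> ennreal" where
  "TM_at \<phi> F t = ennreal (\<phi> t / t) * (\<integral>\<^sup>+ w\<in>{0..t}. F w \<partial>lborel)
    + ennreal ((\<phi> t - 1) / (t - 1)) * (\<integral>\<^sup>+ w\<in>{t..1}. F w \<partial>lborel)"

lemma TM_norm_eq_SUP_TM_at: "TM_norm \<phi> X = (SUP t\<in>{0<..<1}. TM_at \<phi> (rearr X) t)"
  unfolding TM_norm_def TM_at_def ..

lemma TM_at_mono: "(\<And>w. F w \<le> G w) \<Longrightarrow> TM_at \<phi> F t \<le> TM_at \<phi> G t"
  unfolding TM_at_def by (intro add_mono mult_left_mono nn_integral_mono) (auto intro: mult_right_mono)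

lemma TM_at_SUP:
  fixes F :: "nat \<Rightarrow> real \<Rightarrow> ennreal"
  assumes F: "\<And>i. F i \<in> borel_measurable borel" and inc: "\<And>w. incseq (\<lambda>i. F i w)"
  shows "TM_at \<phi> (\<lambda>w. SUP i. F i w) t = (SUP i. TM_at \<phi> (F i) t)"
proof -
  have int_SUP: "(\<integral>\<^sup>+w\<in>A. (SUP i. F i w) \<partial>lborel) = (SUP i. (\<integral>\<^sup>+w\<in>A. F i w \<partial>lborel))"
    if "A \<in> sets borel" for A
  proof -
    have "(\<integral>\<^sup>+w\<in>A. (SUP i. F i w) \<partial>lborel) = (\<integral>\<^sup>+w. (SUP i. F i w * indicator A w) \<partial>lborel)"
      by (simp add: SUP_mult_right_ennreal)
    also have "\<dots> = (SUP i. (\<integral>\<^sup>+w\<in>A. F i w \<partial>lborel))"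
      using F inc that by (intro nn_integral_monotone_convergence_SUP)
        (auto simp: incseq_def le_fun_def intro: mult_right_mono)
    finally show ?thesis .
  qed
  have int_inc: "incseq (\<lambda>i. c * (\<integral>\<^sup>+w\<in>A. F i w \<partial>lborel))" for c A
    using inc by (auto simp: incseq_def intro!: mult_left_mono nn_integral_mono mult_right_mono)
  show ?thesis
    unfolding TM_at_def int_SUP[of "{0..t}", simplified] int_SUP[of "{t..1}", simplified]
      SUP_mult_left_ennreal ennreal_SUP_add[OF int_inc int_inc] ..
qed

lemma TM_norm_cong: "(\<And>l. distr_fun_enn X l = distr_fun_enn Y l) \<Longrightarrow> TM_norm \<phi> X = TM_norm \<phi> Y"
  using rearr_cong[of X Y] by (simp add: TM_norm_eq_SUP_TM_at)

lemma TM_norm_cong_AE: "X \<in> Mplus \<Longrightarrow> Y \<in> Mplus \<Longrightarrow> AE x in Om. X x = Y x \<Longrightarrow> TM_norm \<phi> X = TM_norm \<phi> Y"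
  by (intro TM_norm_cong distr_fun_enn_cong_AE)

lemma rearrangement_invariant_TM_norm: "rearrangement_invariant (TM_norm \<phi>)"
  unfolding rearrangement_invariant_def using distr_fun_enn_eq_if_distr_fun_eq TM_norm_cong by blast

lemma TM_norm_mono:
  assumes "Y \<in> Mplus" and "AE x in Om. X x \<le> Y x"
  shows "TM_norm \<phi> X \<le> TM_norm \<phi> Y"
  unfolding TM_norm_eq_SUP_TM_at
  by (intro SUP_mono' TM_at_mono rearr_mono distr_fun_enn_mono assms)

lemma TM_norm_zero: "TM_norm \<phi> (\<lambda>x. 0) = 0"
  unfolding TM_norm_eq_SUP_TM_at TM_at_def rearr_zero by simp

lemma TM_norm_mult_const:
  assumes X: "X \<in> Mplus" and c: "0 \<le> c"
  shows "TM_norm \<phi> (\<lambda>x. ennreal c * X x) = ennreal c * TM_norm \<phi> X"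
proof (cases "c = 0")
  case False
  with c have "rearr (\<lambda>x. ennreal c * X x) = (\<lambda>w. ennreal c * rearr X w)"
    using rearr_mult_const[OF X] by auto
  then have "TM_at \<phi> (rearr (\<lambda>x. ennreal c * X x)) t = ennreal c * TM_at \<phi> (rearr X) t" for t
    using borel_measurable_rearr[OF X]
    by (simp add: TM_at_def nn_integral_cmult distrib_left mult_ac)
  then show ?thesis unfolding TM_norm_eq_SUP_TM_at by (simp add: SUP_mult_left_ennreal)
qed (simp add: TM_norm_zero)

lemma TM_norm_SUP:
  fixes Xs :: "nat \<Rightarrow> real \<Rightarrow> ennreal"
  assumes Xs: "\<And>n. Xs n \<in> Mplus" and inc: "\<And>x. incseq (\<lambda>n. Xs n x)"
  shows "TM_norm \<phi> (\<lambda>x. SUP n. Xs n x) = (SUP n. TM_norm \<phi> (Xs n))"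
proof -
  have "incseq (\<lambda>n. rearr (Xs n) w)" for w
    using inc by (intro incseq_SucI rearr_mono distr_fun_enn_mono[OF Xs] AE_I2) (auto simp: incseq_Suc_iff)
  moreover have "rearr (\<lambda>x. SUP n. Xs n x) = (\<lambda>w. SUP n. rearr (Xs n) w)"
    using rearr_SUP[OF Xs inc] by auto
  ultimately have "TM_at \<phi> (rearr (\<lambda>x. SUP n. Xs n x)) t = (SUP n. TM_at \<phi> (rearr (Xs n)) t)" for t
    using TM_at_SUP[of "\<lambda>n. rearr (Xs n)", OF borel_measurable_rearr[OF Xs]] by simp
  then show ?thesis unfolding TM_norm_eq_SUP_TM_at by (simp add: SUP_commute[of _ "{0<..<1}"])
qed

lemma TM_norm_monotone_convergence:
  fixes Xs :: "nat \<Rightarrow> real \<Rightarrow> ennreal"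
  assumes Xs: "\<forall>n. Xs n \<in> Mplus" and X: "X \<in> Mplus"
    and ae: "AE x in Om. incseq (\<lambda>n. Xs n x) \<and> (\<lambda>n. Xs n x) \<longlonglongrightarrow> X x"
  shows "(\<lambda>n. TM_norm \<phi> (Xs n)) \<longlonglongrightarrow> TM_norm \<phi> X"
proof -
  \<comment> \<open>Ys n agrees a.e. with Xs n but is increasing everywhere.\<close>
  define Ys where "Ys n x = (SUP m\<in>{..n}. Xs m x)" for n x
  have Ys: "Ys n \<in> Mplus" for n
    using Xs unfolding Ys_def Mplus_def by (intro borel_measurable_SUP) auto
  have inc: "incseq (\<lambda>n. Ys n x)" for x
    unfolding Ys_def incseq_def by (auto intro!: SUP_subset_mono)
  have Ys_eq: "AE x in Om. \<forall>n. Ys n x = Xs n x"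
    using ae by eventually_elim
      (auto simp: Ys_def incseq_def intro!: antisym SUP_least intro: SUP_upper2[where i=n for n])
  have "AE x in Om. (SUP n. Ys n x) = X x"
    using ae Ys_eq by eventually_elim (simp, metis LIMSEQ_SUP LIMSEQ_unique)
  moreover have "(\<lambda>x. SUP n. Ys n x) \<in> Mplus"
    using Ys unfolding Mplus_def by (intro borel_measurable_SUP) auto
  ultimately have "TM_norm \<phi> X = TM_norm \<phi> (\<lambda>x. SUP n. Ys n x)"
    using X by (intro TM_norm_cong_AE) (auto elim: eventually_mono)
  moreover have "TM_norm \<phi> (Xs n) = TM_norm \<phi> (Ys n)" for n
    using Xs Ys Ys_eq by (intro TM_norm_cong_AE) (auto elim: eventually_mono)
  moreover have "incseq (\<lambda>n. TM_norm \<phi> (Ys n))"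
    using Ys inc by (auto simp: incseq_def intro!: TM_norm_mono)
  ultimately show ?thesis
    unfolding TM_norm_SUP[OF Ys inc] using LIMSEQ_SUP by simp
qed

locale concave_fundamental =
  fixes \<phi> :: "real \<Rightarrow> real"
  assumes phi_range: "\<forall>t\<in>{0..1}. \<phi> t \<in> {0..1}"
    and concave: "concave_on {0..1} \<phi>"
    and phi_0: "\<phi> 0 = 0" and phi_1: "\<phi> 1 = 1"
begin

lemma phi_ge_diag: assumes "0 \<le> t" "t \<le> 1" shows "t \<le> \<phi> t"
  using concave_onD[OF concave, of t 0 1] assms by (simp add: phi_0 phi_1)

lemma phi_chord_left:
  assumes "0 \<le> s" "s \<le> t" "0 < t" "t \<le> 1"
  shows "\<phi> t / t * s \<le> \<phi> s"
  using concave_onD[OF concave, of "s / t" 0 t] assms by (simp add: phi_0) (simp add: mult.commute)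

lemma phi_chord_right:
  assumes st: "0 \<le> t" "t \<le> s" "s \<le> 1" "t < 1"
  shows "\<phi> t + (\<phi> t - 1) / (t - 1) * (s - t) \<le> \<phi> s"
proof -
  define u where "u = (s - t) / (1 - t)"
  have u: "0 \<le> u" "u \<le> 1" "u * (1 - t) = s - t" using st by (auto simp: u_def)
  have "(1 - u) * \<phi> t + u * \<phi> 1 \<le> \<phi> ((1 - u) * t + u * 1)"
    using concave_onD[OF concave, of u t 1] st u by simp
  moreover have "(1 - u) * \<phi> t + u * \<phi> 1 = \<phi> t + (1 - \<phi> t) / (1 - t) * (s - t)"
    unfolding phi_1 by (simp add: u_def algebra_simps add_divide_distrib[symmetric])
  moreover have "(1 - \<phi> t) / (1 - t) = (\<phi> t - 1) / (t - 1)"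
    by (metis minus_diff_eq minus_divide_divide)
  moreover have "(1 - u) * t + u * 1 = s" using u(3) by (simp add: algebra_simps)
  ultimately show ?thesis by simp
qed

lemma TM_coeffs:
  assumes "0 < t" "t < 1"
  shows "1 \<le> \<phi> t / t" and "0 \<le> (\<phi> t - 1) / (t - 1)" and "(\<phi> t - 1) / (t - 1) \<le> 1"
    and "\<phi> t / t * t = \<phi> t" and "(\<phi> t - 1) / (t - 1) * (1 - t) = 1 - \<phi> t"
proof -
  have "t \<le> \<phi> t" "\<phi> t \<le> 1" using phi_ge_diag phi_range assms by auto
  with assms show "1 \<le> \<phi> t / t" "0 \<le> (\<phi> t - 1) / (t - 1)" "(\<phi> t - 1) / (t - 1) \<le> 1"
    by (simp_all add: divide_nonpos_neg field_simps)
  show "\<phi> t / t * t = \<phi> t" "(\<phi> t - 1) / (t - 1) * (1 - t) = 1 - \<phi> t"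
    using assms by (simp_all add: field_simps)
qed

text \<open>A decreasing F has average at least F(t) on [0,t] and at most F(t) on [t,1], and the
  weights a = \<phi>(t)/t \<ge> 1 \<ge> b = (1-\<phi>(t))/(1-t) satisfy (a - 1) t = (1 - b)(1 - t).\<close>

lemma nn_integral_le_TM_at:
  fixes F :: "real \<Rightarrow> ennreal"
  assumes F: "F \<in> borel_measurable borel" and "antimono F" and t: "0 < t" "t < 1"
  shows "(\<integral>\<^sup>+w\<in>{0..1}. F w \<partial>lborel) \<le> TM_at \<phi> F t"
proof -
  define a b where "a = \<phi> t / t" and "b = (\<phi> t - 1) / (t - 1)"
  define I1 I2 where "I1 = (\<integral>\<^sup>+w\<in>{0..t}. F w \<partial>lborel)" and "I2 = (\<integral>\<^sup>+w\<in>{t..1}. F w \<partial>lborel)"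
  note ab = TM_coeffs[OF t, folded a_def b_def]
  have I1: "F t * ennreal t \<le> I1"
    using nn_integral_interval_ge_const[of 0 t "F t" F] antimonoD[OF \<open>antimono F\<close>] t
    by (simp add: I1_def)
  have I2: "I2 \<le> F t * ennreal (1 - t)"
    using nn_integral_interval_le_const[of t 1 F "F t"] antimonoD[OF \<open>antimono F\<close>] t
    by (simp add: I2_def)
  have "ennreal (1 - b) * I2 \<le> ennreal (1 - b) * (F t * ennreal (1 - t))"
    using I2 by (rule mult_left_mono) simp
  also have "\<dots> = F t * ennreal ((1 - b) * (1 - t))"
    using ab t by (simp add: ennreal_mult mult_ac)
  also have "(1 - b) * (1 - t) = (a - 1) * t"
    using ab by (simp add: algebra_simps)
  also have "F t * ennreal ((a - 1) * t) = ennreal (a - 1) * (F t * ennreal t)"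
    using ab t by (simp add: ennreal_mult mult_ac)
  also have "\<dots> \<le> ennreal (a - 1) * I1"
    using I1 by (rule mult_left_mono) simp
  finally have shift: "ennreal (1 - b) * I2 \<le> ennreal (a - 1) * I1" .
  have "I1 + I2 = I1 + (ennreal b * I2 + ennreal (1 - b) * I2)"
    using ab by (simp add: distrib_right[symmetric] ennreal_plus[symmetric] del: ennreal_plus)
  also have "\<dots> \<le> I1 + (ennreal b * I2 + ennreal (a - 1) * I1)"
    using shift by (intro add_mono) auto
  also have "\<dots> = (1 + ennreal (a - 1)) * I1 + ennreal b * I2"
    by (simp add: distrib_right add_ac)
  also have "1 + ennreal (a - 1) = ennreal a"
    using ab ennreal_plus[of 1 "a - 1"] by simp
  moreover have "(\<integral>\<^sup>+w\<in>{0..1}. F w \<partial>lborel) = I1 + I2"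
    unfolding I1_def I2_def using t by (intro nn_integral_interval_split F) auto
  ultimately show ?thesis
    unfolding TM_at_def a_def[symmetric] b_def[symmetric] I1_def[symmetric] I2_def[symmetric] by simp
qed

lemma TM_at_le_averages:
  assumes t: "0 < t" "t < 1" and AB: "0 \<le> A" "0 \<le> B"
    and "(\<integral>\<^sup>+w\<in>{0..t}. F w \<partial>lborel) \<le> ennreal (t * A)"
    and "(\<integral>\<^sup>+w\<in>{t..1}. F w \<partial>lborel) \<le> ennreal ((1 - t) * B)"
  shows "TM_at \<phi> F t \<le> ennreal (\<phi> t * A + (1 - \<phi> t) * B)"
proof -
  define a b where "a = \<phi> t / t" and "b = (\<phi> t - 1) / (t - 1)"
  note ab = TM_coeffs[OF t, folded a_def b_def]
  have "TM_at \<phi> F t \<le> ennreal a * ennreal (t * A) + ennreal b * ennreal ((1 - t) * B)"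
    unfolding TM_at_def a_def[symmetric] b_def[symmetric] using assms by (intro add_mono mult_left_mono) auto
  also have "\<dots> = ennreal (a * (t * A) + b * ((1 - t) * B))"
    using ab t AB by (simp add: ennreal_mult[symmetric] ennreal_plus[symmetric] del: ennreal_plus)
  also have "a * (t * A) + b * ((1 - t) * B) = \<phi> t * A + (1 - \<phi> t) * B"
    unfolding mult.assoc[symmetric] ab(4,5) ..
  finally show ?thesis .
qed

lemma TM_at_rearr_split:
  assumes Z: "Z \<in> Mplus" and t: "0 < t" "t < 1"
  shows "TM_at \<phi> (rearr Z) t = ennreal (\<phi> t / t - (\<phi> t - 1) / (t - 1)) * (\<integral>\<^sup>+w\<in>{0..t}. rearr Z w \<partial>lborel)
     + ennreal ((\<phi> t - 1) / (t - 1)) * (\<integral>\<^sup>+x. Z x \<partial>Om)"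
proof -
  define a b where "a = \<phi> t / t" and "b = (\<phi> t - 1) / (t - 1)"
  note ab = TM_coeffs[OF t, folded a_def b_def]
  have "ennreal a = ennreal (a - b) + ennreal b"
    using ab by (simp flip: ennreal_plus)
  moreover have "(\<integral>\<^sup>+x. Z x \<partial>Om) = (\<integral>\<^sup>+w\<in>{0..t}. rearr Z w \<partial>lborel) + (\<integral>\<^sup>+w\<in>{t..1}. rearr Z w \<partial>lborel)"
    using nn_integral_rearr[OF Z] nn_integral_interval_split[OF borel_measurable_rearr[OF Z], of 0 t 1] t
    by simp
  ultimately show ?thesis
    unfolding TM_at_def a_def[symmetric] b_def[symmetric] by (simp add: distrib_left distrib_right add_ac)
qed

lemma TM_at_rearr_add_const:
  assumes X: "X \<in> Mplus" and c: "0 \<le> c" and t: "0 < t" "t < 1"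
  shows "TM_at \<phi> (rearr (\<lambda>x. X x + ennreal c)) t = TM_at \<phi> (rearr X) t + ennreal c"
proof -
  define a b where "a = \<phi> t / t" and "b = (\<phi> t - 1) / (t - 1)"
  note ab = TM_coeffs[OF t, folded a_def b_def]
  have "(\<integral>\<^sup>+w\<in>{u..v}. rearr (\<lambda>x. X x + ennreal c) w \<partial>lborel)
      = (\<integral>\<^sup>+w\<in>{u..v}. rearr X w \<partial>lborel) + ennreal c * ennreal (v - u)"
    if "0 \<le> u" "u \<le> v" "v \<le> 1" for u v
  proof -
    have "(\<integral>\<^sup>+w\<in>{u..v}. rearr (\<lambda>x. X x + ennreal c) w \<partial>lborel) = (\<integral>\<^sup>+w\<in>{u..v}. rearr X w + ennreal c \<partial>lborel)"
      using that by (intro nn_integral_interval_cong_AE rearr_add_const[OF X c]) auto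
    then show ?thesis
      using nn_integral_interval_add_const[OF borel_measurable_rearr[OF X] \<open>u \<le> v\<close>] by simp
  qed
  then have "TM_at \<phi> (rearr (\<lambda>x. X x + ennreal c)) t
      = TM_at \<phi> (rearr X) t + ennreal c * (ennreal a * ennreal t + ennreal b * ennreal (1 - t))"
    unfolding TM_at_def a_def[symmetric] b_def[symmetric] using t by (simp add: algebra_simps)
  also have "ennreal a * ennreal t + ennreal b * ennreal (1 - t) = 1"
    using ab t phi_range by (simp add: ennreal_mult[symmetric] ennreal_plus[symmetric] del: ennreal_plus)
  finally show ?thesis by simp
qed

lemma nn_integral_le_TM_norm:
  assumes X: "X \<in> Mplus"
  shows "(\<integral>\<^sup>+x. X x \<partial>Om) \<le> TM_norm \<phi> X"
proof -
  have "(\<integral>\<^sup>+x. X x \<partial>Om) \<le> TM_at \<phi> (rearr X) (1/2)"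
    unfolding nn_integral_rearr[OF X]
    by (intro nn_integral_le_TM_at borel_measurable_rearr X rearr_antimono) auto
  also have "\<dots> \<le> TM_norm \<phi> X"
    unfolding TM_norm_eq_SUP_TM_at by (intro SUP_upper) auto
  finally show ?thesis .
qed

lemma M_norm_le_TM_norm:
  assumes X: "X \<in> Mplus"
  shows "M_norm \<phi> X \<le> TM_norm \<phi> X"
  unfolding M_norm_def
proof (rule SUP_least)
  fix t :: real assume t: "t \<in> {0<..1}"
  show "ennreal (\<phi> t / t) * (\<integral>\<^sup>+ w\<in>{0..t}. rearr X w \<partial>lborel) \<le> TM_norm \<phi> X"
  proof (cases "t = 1")
    case True
    then show ?thesis
      using nn_integral_le_TM_norm[OF X] nn_integral_rearr[OF X] by (simp add: phi_1)
  next
    case False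
    then have "ennreal (\<phi> t / t) * (\<integral>\<^sup>+ w\<in>{0..t}. rearr X w \<partial>lborel) \<le> TM_at \<phi> (rearr X) t"
      unfolding TM_at_def by simp
    also have "\<dots> \<le> TM_norm \<phi> X"
      unfolding TM_norm_eq_SUP_TM_at using t False by (intro SUP_upper) auto
    finally show ?thesis .
  qed
qed

text \<open>The value at t is the piecewise linear interpolation of \<phi> at 0, t and 1, evaluated
  at \<mu>(E); by concavity it lies below \<phi>(\<mu>(E)), with equality for t = \<mu>(E).\<close>

lemma TM_at_rearr_indicator:
  assumes E: "E \<in> sets Om" and t: "0 < t" "t < 1"
  shows "TM_at \<phi> (rearr (indicator E)) t = ennreal (if measure Om E \<le> t then \<phi> t / t * measure Om E
    else \<phi> t + (\<phi> t - 1) / (t - 1) * (measure Om E - t))"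
proof -
  define s where "s = measure Om E"
  have s: "0 \<le> s" "s \<le> 1" using measure_Om_le_1 unfolding s_def by auto
  have interval_integral: "(\<integral>\<^sup>+w\<in>{u..v}. rearr (indicator E) w \<partial>lborel) = emeasure lborel ({u..v} \<inter> {..<s})"
    if "0 \<le> u" for u v
  proof -
    have "(\<integral>\<^sup>+w\<in>{u..v}. rearr (indicator E) w \<partial>lborel) = (\<integral>\<^sup>+w. indicator ({u..v} \<inter> {..<s}) w \<partial>lborel)"
      using that rearr_indicator[OF E] unfolding s_def[symmetric]
      by (intro nn_integral_cong) (auto simp: indicator_def)
    then show ?thesis by simp
  qed
  have "TM_at \<phi> (rearr (indicator E)) t
      = ennreal (if s \<le> t then \<phi> t / t * s else \<phi> t + (\<phi> t - 1) / (t - 1) * (s - t))"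
  proof (cases "s \<le> t")
    case True
    then have "{0..t} \<inter> {..<s} = {0..<s}" "{t..1} \<inter> {..<s} = {}" by auto
    with True s t TM_coeffs[OF t] show ?thesis
      unfolding TM_at_def by (simp add: interval_integral ennreal_mult[symmetric])
  next
    case False
    then have "{0..t} \<inter> {..<s} = {0..t}" "{t..1} \<inter> {..<s} = {t..<s}" using s by auto
    moreover have "0 \<le> (\<phi> t - 1) / (t - 1) * (s - t)"
      using mult_nonneg_nonneg[OF TM_coeffs(2)[OF t], of "s - t"] False by simp
    ultimately show ?thesis using False s t TM_coeffs[OF t]
      unfolding TM_at_def
      by (simp add: interval_integral ennreal_mult[symmetric] ennreal_plus[symmetric] del: ennreal_plus)
  qed
  then show ?thesis by (simp add: s_def)
qed

lemma TM_norm_indicator: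
  assumes E: "E \<in> sets Om"
  shows "TM_norm \<phi> (indicator E) = ennreal (\<phi> (measure Om E))"
proof -
  define s where "s = measure Om E"
  have s: "0 \<le> s" "s \<le> 1" using measure_Om_le_1 unfolding s_def by auto
  note at_t = TM_at_rearr_indicator[OF E, folded s_def]
  have "TM_at \<phi> (rearr (indicator E)) t \<le> ennreal (\<phi> s)" if "t \<in> {0<..<1}" for t
    using that at_t phi_chord_left[of s t] phi_chord_right[of t s] s by (auto intro!: ennreal_leI)
  moreover have "ennreal (\<phi> s) \<le> (SUP t\<in>{0<..<1}. TM_at \<phi> (rearr (indicator E)) t)"
  proof -
    consider "s = 0" | "0 < s" "s < 1" | "s = 1" using s by linarith
    then show ?thesis
    proof cases
      case 2
      then show ?thesis using at_t[of s] by (intro SUP_upper2[of s]) auto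
    next
      case 3
      then show ?thesis using at_t[of "1/2"] by (intro SUP_upper2[of "1/2"]) (auto simp: phi_1 field_simps)
    qed (simp add: phi_0)
  qed
  ultimately show ?thesis
    unfolding TM_norm_eq_SUP_TM_at s_def[symmetric] by (intro antisym SUP_least) auto
qed

lemma TM_norm_add_const:
  "X \<in> Mplus \<Longrightarrow> 0 \<le> c \<Longrightarrow> TM_norm \<phi> (\<lambda>x. X x + ennreal c) = TM_norm \<phi> X + ennreal c"
  unfolding TM_norm_eq_SUP_TM_at by (simp add: TM_at_rearr_add_const ennreal_SUP_add_left[symmetric])

lemma PTE_TM_norm: "PTE (TM_norm \<phi>)"
  unfolding PTE_def
proof (intro conjI ballI allI impI)
  fix X d assume X: "X \<in> Mplus" and d: "0 \<le> (d::real)" and ae: "AE x in Om. ennreal d \<le> X x"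
  define Y where "Y = (\<lambda>x. X x - ennreal d)"
  have Y: "Y \<in> Mplus" using X unfolding Y_def Mplus_def by measurable
  then have "(\<lambda>x. Y x + ennreal d) \<in> Mplus" unfolding Mplus_def by measurable
  moreover have "AE x in Om. X x = Y x + ennreal d"
    using ae by eventually_elim (simp add: Y_def diff_add_cancel_ennreal)
  ultimately have "TM_norm \<phi> X = TM_norm \<phi> (\<lambda>x. Y x + ennreal d)"
    using X by (rule TM_norm_cong_AE[rotated])
  also have "\<dots> = TM_norm \<phi> Y + ennreal d"
    using TM_norm_add_const[OF Y d] .
  finally have "TM_norm \<phi> X = TM_norm \<phi> Y + ennreal d" .
  then show "TM_norm \<phi> (\<lambda>x. X x - ennreal d) = TM_norm \<phi> X - ennreal d"
    unfolding Y_def[symmetric] by simp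
qed (rule TM_norm_add_const)

lemma TM_norm_eq_0_iff:
  assumes X: "X \<in> Mplus"
  shows "TM_norm \<phi> X = 0 \<longleftrightarrow> (AE x in Om. X x = 0)"
proof
  assume "TM_norm \<phi> X = 0"
  then have "(\<integral>\<^sup>+x. X x \<partial>Om) = 0" using nn_integral_le_TM_norm[OF X] by simp
  then show "AE x in Om. X x = 0" using X unfolding Mplus_def by (simp add: nn_integral_0_iff_AE)
next
  assume "AE x in Om. X x = 0"
  then have "TM_norm \<phi> X = TM_norm \<phi> (\<lambda>x. 0)"
    using X by (intro TM_norm_cong_AE) (auto simp: Mplus_def)
  then show "TM_norm \<phi> X = 0" by (simp add: TM_norm_zero)
qed

lemma TM_norm_add_le:
  assumes X: "X \<in> Mplus" and Y: "Y \<in> Mplus"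
  shows "TM_norm \<phi> (\<lambda>x. X x + Y x) \<le> TM_norm \<phi> X + TM_norm \<phi> Y"
  unfolding TM_norm_eq_SUP_TM_at
proof (rule SUP_least)
  fix t :: real assume "t \<in> {0<..<1}"
  then have t: "0 < t" "t < 1" by auto
  define A B where "A = ennreal (\<phi> t / t - (\<phi> t - 1) / (t - 1))" and "B = ennreal ((\<phi> t - 1) / (t - 1))"
  have XY: "(\<lambda>x. X x + Y x) \<in> Mplus" using X Y unfolding Mplus_def by measurable
  have "TM_at \<phi> (rearr (\<lambda>x. X x + Y x)) t
      = A * (\<integral>\<^sup>+w\<in>{0..t}. rearr (\<lambda>x. X x + Y x) w \<partial>lborel) + B * ((\<integral>\<^sup>+x. X x \<partial>Om) + (\<integral>\<^sup>+x. Y x \<partial>Om))"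
    using TM_at_rearr_split[OF XY t] X Y unfolding A_def B_def Mplus_def by (simp add: nn_integral_add)
  also have "\<dots> \<le> A * ((\<integral>\<^sup>+w\<in>{0..t}. rearr X w \<partial>lborel) + (\<integral>\<^sup>+w\<in>{0..t}. rearr Y w \<partial>lborel))
      + B * ((\<integral>\<^sup>+x. X x \<partial>Om) + (\<integral>\<^sup>+x. Y x \<partial>Om))"
    using nn_integral_rearr_add_le[OF X Y, of t] t by (intro add_right_mono mult_left_mono) auto
  also have "\<dots> = TM_at \<phi> (rearr X) t + TM_at \<phi> (rearr Y) t"
    unfolding TM_at_rearr_split[OF X t] TM_at_rearr_split[OF Y t] A_def[symmetric] B_def[symmetric]
    by (simp add: distrib_left add_ac)
  also have "\<dots> \<le> (SUP t\<in>{0<..<1}. TM_at \<phi> (rearr X) t) + (SUP t\<in>{0<..<1}. TM_at \<phi> (rearr Y) t)"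
    using t by (intro add_mono SUP_upper) auto
  finally show "TM_at \<phi> (rearr (\<lambda>x. X x + Y x)) t
      \<le> (SUP t\<in>{0<..<1}. TM_at \<phi> (rearr X) t) + (SUP t\<in>{0<..<1}. TM_at \<phi> (rearr Y) t)" .
qed

lemma has_fundamental_function_TM_norm: "has_fundamental_function (TM_norm \<phi>) \<phi>"
  unfolding has_fundamental_function_def using TM_norm_indicator by blast

lemma ri_function_norm_TM_norm: "ri_function_norm (TM_norm \<phi>)"
  unfolding ri_function_norm_def banach_function_norm_def
proof (intro conjI ballI allI impI rearrangement_invariant_TM_norm)
  fix E assume E: "E \<in> sets Om"
  then show "TM_norm \<phi> (indicator E) < \<infinity>" by (simp add: TM_norm_indicator)
  have "(\<integral>\<^sup>+ x\<in>E. X x \<partial>Om) \<le> ennreal 1 * TM_norm \<phi> X" if "X \<in> Mplus" for X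
  proof -
    have "(\<integral>\<^sup>+ x\<in>E. X x \<partial>Om) \<le> (\<integral>\<^sup>+ x. X x \<partial>Om)"
      by (intro nn_integral_mono) (auto simp: indicator_def)
    then show ?thesis using nn_integral_le_TM_norm[OF that] by simp
  qed
  then show "\<exists>c::real. 0 < c \<and> (\<forall>X\<in>Mplus. (\<integral>\<^sup>+ x\<in>E. X x \<partial>Om) \<le> ennreal c * TM_norm \<phi> X)"
    by (intro exI[of _ 1]) auto
next
  show "TM_norm \<phi> (indicator (space Om)) = 1"
    using TM_norm_indicator[of "space Om"] emeasure_Om_space by (simp add: measure_def phi_1)
qed (auto simp: TM_norm_eq_0_iff TM_norm_mult_const TM_norm_add_le TM_norm_mono
    intro: TM_norm_monotone_convergence)

end

section \<open>Step functions\<close>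

lemma sum_lessThan_cyclic_shift:
  assumes "0 < (n::nat)"
  shows "(\<Sum>j<n. g ((j + k) mod n)) = (\<Sum>j<n. g j)"
proof -
  have "i = j" if "i \<le> j" "j < n" "(i + k) mod n = (j + k) mod n" for i j
  proof -
    have "n dvd j - i" using that mod_eq_dvd_iff_nat[of "i + k" "j + k" n] by simp
    with that show ?thesis using dvd_imp_le[of n "j - i"] by (cases "i < j") auto
  qed
  then have inj: "inj_on (\<lambda>j. (j + k) mod n) {..<n}"
    unfolding inj_on_def by (metis lessThan_iff nat_le_linear)
  have "(\<lambda>j. (j + k) mod n) ` {..<n} = {..<n}"
    using inj assms by (intro endo_inj_surj) auto
  with inj show ?thesis
    using sum.reindex[OF inj, of g] by simp
qed

definition cell :: "real \<Rightarrow> real \<Rightarrow> nat \<Rightarrow> nat \<Rightarrow> real set" where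
  "cell a L n j = {a + real j * L / real n ..< a + real (Suc j) * L / real n}"

definition cell_index :: "real \<Rightarrow> real \<Rightarrow> nat \<Rightarrow> real \<Rightarrow> nat" where
  "cell_index a L n x = nat \<lfloor>(x - a) * real n / L\<rfloor>"

definition step_fun :: "real \<Rightarrow> real \<Rightarrow> nat \<Rightarrow> (nat \<Rightarrow> real) \<Rightarrow> real \<Rightarrow> real" where
  "step_fun a L n g x = (\<Sum>j<n. g j * indicator (cell a L n j) x)"

lemma cell_in_sets [measurable]: "cell a L n j \<in> sets borel"
  by (simp add: cell_def)

lemma borel_measurable_step_fun [measurable]: "step_fun a L n g \<in> borel_measurable borel"
  unfolding step_fun_def[abs_def] by measurable

lemma emeasure_cell:
  assumes "0 < L" "0 < n"
  shows "emeasure lborel (cell a L n j) = ennreal (L / real n)"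
proof -
  have "a + real j * L / real n \<le> a + real (Suc j) * L / real n"
    using assms by (intro add_left_mono divide_right_mono mult_right_mono) auto
  moreover have "a + real (Suc j) * L / real n - (a + real j * L / real n) = L / real n"
    by (simp add: algebra_simps diff_divide_distrib[symmetric])
  ultimately show ?thesis unfolding cell_def by simp
qed

lemma disjoint_cells:
  assumes L: "0 < L" and n: "0 < n" and "j \<noteq> j'"
  shows "cell a L n j \<inter> cell a L n j' = {}"
proof -
  have "real (Suc i) * L / real n \<le> real i' * L / real n" if "i < i'" for i i'
    using that L n by (intro divide_right_mono mult_right_mono) auto
  with \<open>j \<noteq> j'\<close> show ?thesis
    unfolding cell_def by (cases "j < j'") (force simp: not_less dest!: le_neq_implies_less)+
qed

lemma cell_subset:
  assumes L: "0 < L" and n: "0 < n" and j: "j < n"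
  shows "cell a L n j \<subseteq> {a..<a + L}"
proof -
  have "real (Suc j) * L / real n \<le> L"
    using j L n by (simp add: divide_le_eq mult.commute mult_left_mono)
  then show ?thesis unfolding cell_def using L by auto
qed

lemma cell_index_spec:
  assumes L: "0 < L" and n: "0 < n" and x: "a \<le> x" "x < a + L"
  shows "cell_index a L n x < n" and "x \<in> cell a L n (cell_index a L n x)"
proof -
  define y where "y = (x - a) * real n / L"
  define i where "i = cell_index a L n x"
  have y: "0 \<le> y" "y < real n" "x = a + y * L / real n"
    using x L n by (auto simp: y_def divide_less_eq mult.commute)
  have i: "real i \<le> y" "y < real i + 1"
    using y unfolding i_def cell_index_def y_def[symmetric] by (auto simp: of_nat_floor)
  then show "cell_index a L n x < n" using y unfolding i_def by linarith
  have "real i * L / real n \<le> y * L / real n" "y * L / real n < real (Suc i) * L / real n"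
    using i L n by (auto intro!: divide_right_mono mult_right_mono divide_strict_right_mono mult_strict_right_mono)
  then show "x \<in> cell a L n (cell_index a L n x)"
    unfolding i_def[symmetric] cell_def using y by auto
qed

lemma step_fun_cell:
  assumes L: "0 < L" and n: "0 < n" and "j < n" "x \<in> cell a L n j"
  shows "step_fun a L n g x = g j"
proof -
  have "step_fun a L n g x = (\<Sum>i<n. if i = j then g j else 0)"
    unfolding step_fun_def using disjoint_cells[OF L n, of _ j a] assms(4)
    by (intro sum.cong) (auto simp: indicator_def)
  then show ?thesis using assms(3) by simp
qed

lemma step_fun_outside:
  assumes L: "0 < L" and n: "0 < n" and "x \<notin> {a..<a + L}"
  shows "step_fun a L n g x = 0"
proof -
  have "x \<notin> cell a L n j" if "j < n" for j
    using cell_subset[OF L n that] assms(3) by blast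
  then show ?thesis unfolding step_fun_def by (intro sum.neutral) auto
qed

lemma step_fun_eq:
  assumes L: "0 < L" and n: "0 < n"
  shows "step_fun a L n g x = (if a \<le> x \<and> x < a + L then g (cell_index a L n x) else 0)"
  using step_fun_cell[OF L n] step_fun_outside[OF L n] cell_index_spec[OF L n] by auto

lemma step_fun_nonneg: "(\<And>j. 0 \<le> g j) \<Longrightarrow> 0 \<le> step_fun a L n g x"
  unfolding step_fun_def by (intro sum_nonneg) auto

lemma step_fun_mod: "step_fun a L n (\<lambda>j. g (j mod n)) = step_fun a L n g"
  unfolding step_fun_def by (intro ext sum.cong) auto

lemma emeasure_step_fun_greater:
  fixes g :: "nat \<Rightarrow> real"
  assumes L: "0 < L" and n: "0 < n" and l: "0 \<le> l"
  shows "emeasure lborel {x. l < step_fun a L n g x} = (\<Sum>j<n. if l < g j then ennreal (L / real n) else 0)"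
proof -
  have "{x. l < step_fun a L n g x} = (\<Union>j\<in>{j\<in>{..<n}. l < g j}. cell a L n j)"
  proof safe
    fix x assume "l < step_fun a L n g x"
    with l show "x \<in> (\<Union>j\<in>{j\<in>{..<n}. l < g j}. cell a L n j)"
      using cell_index_spec[OF L n, of a x] by (auto simp: step_fun_eq[OF L n] split: if_splits)
  qed (auto simp: step_fun_cell[OF L n])
  then have "emeasure lborel {x. l < step_fun a L n g x}
      = (\<Sum>j\<in>{j\<in>{..<n}. l < g j}. emeasure lborel (cell a L n j))"
    using disjoint_cells[OF L n] by (auto intro!: sum_emeasure[symmetric] simp: disjoint_family_on_def)
  also have "\<dots> = (\<Sum>j\<in>{j\<in>{..<n}. l < g j}. ennreal (L / real n))"
    by (simp add: emeasure_cell[OF L n])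
  also have "\<dots> = (\<Sum>j<n. if l < g j then ennreal (L / real n) else 0)"
    by (rule sum.inter_filter) simp
  finally show ?thesis .
qed

lemma sum_step_fun_cyclic_shifts:
  assumes L: "0 < L" and n: "0 < n"
  shows "(\<Sum>k<n. step_fun a L n (\<lambda>j. g ((j + k) mod n)) x) = (\<Sum>j<n. g j) * indicator {a..<a + L} x"
proof (cases "x \<in> {a..<a + L}")
  case True
  then show ?thesis
    using sum_lessThan_cyclic_shift[OF n, of g "cell_index a L n x"]
    by (simp add: step_fun_eq[OF L n] add.commute)
qed (simp add: step_fun_outside[OF L n])

lemma nn_integral_step_fun:
  assumes L: "0 < L" and n: "0 < n" and g: "\<And>j. 0 \<le> g j"
  shows "(\<integral>\<^sup>+x. ennreal (step_fun a L n g x) \<partial>lborel) = ennreal (L / real n * (\<Sum>j<n. g j))"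
proof -
  have "(\<integral>\<^sup>+x. ennreal (step_fun a L n g x) \<partial>lborel)
      = (\<integral>\<^sup>+x. (\<Sum>j<n. ennreal (g j) * indicator (cell a L n j) x) \<partial>lborel)"
    unfolding step_fun_def using g
    by (intro nn_integral_cong) (simp add: ennreal_mult indicator_def flip: sum_ennreal)
  also have "\<dots> = (\<Sum>j<n. \<integral>\<^sup>+x. ennreal (g j) * indicator (cell a L n j) x \<partial>lborel)"
    by (rule nn_integral_sum) auto
  also have "\<dots> = (\<Sum>j<n. ennreal (g j) * ennreal (L / real n))"
    by (simp add: nn_integral_cmult_indicator emeasure_cell[OF L n])
  also have "\<dots> = ennreal (L / real n * (\<Sum>j<n. g j))"
    using g L by (simp add: ennreal_mult[symmetric] sum_distrib_left sum_divide_distrib ac_simps)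
  finally show ?thesis .
qed

lemma step_fun_right_endpoints_le:
  assumes L: "0 < L" and n: "0 < n" and "antimono f" and "\<And>x. 0 \<le> f x"
  shows "step_fun a L n (\<lambda>j. f (a + real (Suc j) * L / real n)) x \<le> f x"
proof (cases "x \<in> {a..<a + L}")
  case True
  then have "x < a + real (Suc (cell_index a L n x)) * L / real n"
    using cell_index_spec(2)[OF L n, of a x] by (simp add: cell_def)
  then show ?thesis
    using True antimonoD[OF \<open>antimono f\<close>] by (simp add: step_fun_eq[OF L n])
qed (simp add: step_fun_outside[OF L n] \<open>\<And>x. 0 \<le> f x\<close>)

lemma nn_integral_antimono_le_sum:
  assumes L: "0 < L" and n: "0 < n" and "antimono f" and f0: "\<And>x. 0 \<le> f x"
  shows "(\<integral>\<^sup>+w\<in>{a..a + L}. ennreal (f w) \<partial>lborel)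
    \<le> ennreal (L / real n * (f a + (\<Sum>j<n. f (a + real (Suc j) * L / real n))))"
proof -
  define left where "left j = f (a + real j * L / real n)" for j
  obtain m where m: "n = Suc m" using n by (cases n) auto
  have "(\<Sum>j<n. left j) = left 0 + (\<Sum>j<m. left (Suc j))"
    unfolding m by (rule sum.lessThan_Suc_shift)
  also have "\<dots> \<le> left 0 + (\<Sum>j<n. left (Suc j))"
    unfolding m using f0 by (simp add: left_def)
  finally have sum_le: "(\<Sum>j<n. left j) \<le> left 0 + (\<Sum>j<n. left (Suc j))" .
  have "(\<integral>\<^sup>+w\<in>{a..a + L}. ennreal (f w) \<partial>lborel) \<le> (\<integral>\<^sup>+w. ennreal (step_fun a L n left w) \<partial>lborel)"
  proof (rule nn_integral_mono_AE)
    show "AE w in lborel. ennreal (f w) * indicator {a..a + L} w \<le> ennreal (step_fun a L n left w)"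
      using AE_lborel_singleton[of "a + L"]
    proof eventually_elim
      fix w assume "w \<noteq> a + L"
      moreover have "f w \<le> step_fun a L n left w" if "a \<le> w" "w < a + L"
        using that cell_index_spec(2)[OF L n, of a w] antimonoD[OF \<open>antimono f\<close>]
        by (simp add: step_fun_eq[OF L n] left_def cell_def)
      ultimately show "ennreal (f w) * indicator {a..a + L} w \<le> ennreal (step_fun a L n left w)"
        by (auto simp: indicator_def intro: ennreal_leI)
    qed
  qed
  also have "\<dots> = ennreal (L / real n * (\<Sum>j<n. left j))"
    using f0 L n by (intro nn_integral_step_fun) (auto simp: left_def)
  also have "\<dots> \<le> ennreal (L / real n * (left 0 + (\<Sum>j<n. left (Suc j))))"
    using sum_le L by (intro ennreal_leI mult_left_mono) auto
  finally show ?thesis by (simp add: left_def)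
qed

lemma distr_fun_two_blocks:
  fixes g h :: "nat \<Rightarrow> real"
  assumes t: "0 < t" "t < 1" and n: "0 < n" and l: "0 \<le> l"
  shows "distr_fun (\<lambda>x. ennreal (step_fun 0 t n g x + step_fun t (1 - t) n h x)) l
    = (\<Sum>j<n. if l < g j then ennreal (t / real n) else 0) + (\<Sum>j<n. if l < h j then ennreal ((1 - t) / real n) else 0)"
proof -
  have t': "0 < 1 - t" using t by simp
  define A B where "A = {x. l < step_fun 0 t n g x}" and "B = {x. l < step_fun t (1 - t) n h x}"
  note step_fun_eq[OF t(1) n, of 0 g] step_fun_eq[OF t' n, of t h]
  then have A: "A \<subseteq> {0..<t}" and B: "B \<subseteq> {t..<1}" and levels:
    "{x \<in> space Om. ennreal l < ennreal (step_fun 0 t n g x + step_fun t (1 - t) n h x)} = A \<union> B"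
    using l t unfolding A_def B_def by (auto simp: ennreal_less_iff split: if_splits)
  then have "distr_fun (\<lambda>x. ennreal (step_fun 0 t n g x + step_fun t (1 - t) n h x)) l = emeasure lborel (A \<union> B)"
    unfolding distr_fun_def levels using A B t by (intro emeasure_Om_eq_lborel) (auto simp: A_def B_def)
  also have "\<dots> = emeasure lborel A + emeasure lborel B"
  proof (rule plus_emeasure[symmetric])
    show "A \<inter> B = {}" using A B by fastforce
  qed (auto simp: A_def B_def)
  finally show ?thesis
    unfolding A_def B_def emeasure_step_fun_greater[OF t(1) n l] emeasure_step_fun_greater[OF t' n l] .
qed

lemma average_cyclic_shifts_two_blocks:
  fixes u v :: "nat \<Rightarrow> real"
  assumes t: "0 < t" "t < 1" and n: "0 < n" and u: "\<And>j. 0 \<le> u j" and v: "\<And>j. 0 \<le> v j"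
    and x: "0 \<le> x" "x < 1"
  shows "(\<Sum>k<n. ennreal (1 / real n) * ennreal (step_fun 0 t n (\<lambda>j. u ((j + k) mod n)) x
      + step_fun t (1 - t) n (\<lambda>j. v ((j + k) mod n)) x))
    = ennreal (if x < t then (\<Sum>j<n. u j) / real n else (\<Sum>j<n. v j) / real n)"
proof -
  have t': "0 < 1 - t" using t by simp
  have "(\<Sum>k<n. ennreal (1 / real n) * ennreal (step_fun 0 t n (\<lambda>j. u ((j + k) mod n)) x
      + step_fun t (1 - t) n (\<lambda>j. v ((j + k) mod n)) x))
    = (\<Sum>k<n. ennreal ((step_fun 0 t n (\<lambda>j. u ((j + k) mod n)) x
      + step_fun t (1 - t) n (\<lambda>j. v ((j + k) mod n)) x) / real n))"
    using u v
    by (intro sum.cong refl) (simp add: step_fun_nonneg add_nonneg_nonneg flip: ennreal_mult del: ennreal_plus)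
  also have "\<dots> = ennreal (\<Sum>k<n. (step_fun 0 t n (\<lambda>j. u ((j + k) mod n)) x
      + step_fun t (1 - t) n (\<lambda>j. v ((j + k) mod n)) x) / real n)"
    using u v by (intro sum_ennreal) (simp add: step_fun_nonneg)
  also have "\<dots> = ennreal (if x < t then (\<Sum>j<n. u j) / real n else (\<Sum>j<n. v j) / real n)"
    using x by (simp add: sum_divide_distrib[symmetric] sum.distrib sum_step_fun_cyclic_shifts[OF t(1) n]
        sum_step_fun_cyclic_shifts[OF t' n])
  finally show ?thesis .
qed

section \<open>Minimality\<close>

lemma SUP_min_of_nat_ennreal: "(SUP i. min a (of_nat i :: ennreal)) = a"
  by (simp add: inf_min[symmetric] inf_SUP[symmetric] ennreal_SUP_of_nat_eq_top)

context
  fixes R :: "(real \<Rightarrow> ennreal) \<Rightarrow> ennreal"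
  assumes R: "banach_function_norm R"
begin

lemma function_norm_mono: "X \<in> Mplus \<Longrightarrow> Y \<in> Mplus \<Longrightarrow> AE x in Om. X x \<le> Y x \<Longrightarrow> R X \<le> R Y"
  using R unfolding banach_function_norm_def by blast

lemma function_norm_mult_const: "X \<in> Mplus \<Longrightarrow> 0 \<le> c \<Longrightarrow> R (\<lambda>x. ennreal c * X x) = ennreal c * R X"
  using R unfolding banach_function_norm_def by blast

lemma function_norm_add_le: "X \<in> Mplus \<Longrightarrow> Y \<in> Mplus \<Longrightarrow> R (\<lambda>x. X x + Y x) \<le> R X + R Y"
  using R unfolding banach_function_norm_def by blast

lemma function_norm_zero: "R (\<lambda>x. 0) = 0"
proof -
  have "(\<lambda>x. 0::ennreal) \<in> Mplus" unfolding Mplus_def by simp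
  with R show ?thesis unfolding banach_function_norm_def by simp
qed

lemma function_norm_sum_le:
  assumes "finite A" and "\<And>k. k \<in> A \<Longrightarrow> h k \<in> Mplus"
  shows "R (\<lambda>x. \<Sum>k\<in>A. h k x) \<le> (\<Sum>k\<in>A. R (h k))"
  using assms
proof (induction A rule: finite_induct)
  case empty
  then show ?case by (simp add: function_norm_zero)
next
  case (insert k A)
  have "(\<lambda>x. \<Sum>k\<in>A. h k x) \<in> Mplus"
    using insert.prems unfolding Mplus_def by (intro borel_measurable_sum) auto
  then have "R (\<lambda>x. h k x + (\<Sum>k\<in>A. h k x)) \<le> R (h k) + R (\<lambda>x. \<Sum>k\<in>A. h k x)"
    using insert.prems by (intro function_norm_add_le) auto
  also have "\<dots> \<le> R (h k) + (\<Sum>k\<in>A. R (h k))"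
    using insert by (intro add_left_mono) auto
  finally show ?case using insert by simp
qed

lemma function_norm_average_le:
  assumes n: "0 < n" and S: "\<And>k. k < n \<Longrightarrow> S k \<in> Mplus" and le: "\<And>k. k < n \<Longrightarrow> R (S k) \<le> C"
  shows "R (\<lambda>x. \<Sum>k<n. ennreal (1 / real n) * S k x) \<le> C"
proof -
  have "R (\<lambda>x. \<Sum>k<n. ennreal (1 / real n) * S k x) \<le> (\<Sum>k<n. R (\<lambda>x. ennreal (1 / real n) * S k x))"
    using S by (intro function_norm_sum_le) (auto simp: Mplus_def)
  also have "\<dots> = (\<Sum>k<n. ennreal (1 / real n) * R (S k))"
    using S by (simp add: function_norm_mult_const)
  also have "\<dots> \<le> (\<Sum>k<n. ennreal (1 / real n) * C)"
    using le by (intro sum_mono mult_left_mono) auto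
  also have "\<dots> = C"
    using n by (simp add: ennreal_of_nat_eq_real_of_nat mult.assoc[symmetric] ennreal_mult[symmetric] del: ennreal_mult)
  finally show ?thesis .
qed

end

locale PTE_ri_norm = concave_fundamental +
  fixes R :: "(real \<Rightarrow> ennreal) \<Rightarrow> ennreal"
  assumes PTE: "PTE R" and ri: "ri_function_norm R" and fundamental: "has_fundamental_function R \<phi>"
begin

lemma banach_function_norm: "banach_function_norm R"
  using ri unfolding ri_function_norm_def by simp

lemma R_add_const: "X \<in> Mplus \<Longrightarrow> 0 \<le> c \<Longrightarrow> R (\<lambda>x. X x + ennreal c) = R X + ennreal c"
  using PTE unfolding PTE_def by blast

lemma R_cong: "X \<in> Mplus \<Longrightarrow> Y \<in> Mplus \<Longrightarrow> (\<And>l. 0 \<le> l \<Longrightarrow> distr_fun X l = distr_fun Y l) \<Longrightarrow> R X = R Y"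
  using ri unfolding ri_function_norm_def rearrangement_invariant_def by blast

lemma R_rearr: "Z \<in> Mplus \<Longrightarrow> R (rearr Z) = R Z"
  using R_cong[OF rearr_in_Mplus] distr_fun_enn_rearr unfolding distr_fun_def distr_fun_enn_def by simp

lemma R_cong_AE: "X \<in> Mplus \<Longrightarrow> Y \<in> Mplus \<Longrightarrow> AE x in Om. X x = Y x \<Longrightarrow> R X = R Y"
  by (intro antisym function_norm_mono[OF banach_function_norm]) (auto elim: eventually_mono)

lemma R_two_values:
  assumes "0 \<le> B" "B \<le> A" "0 \<le> t" "t \<le> 1"
  shows "R (\<lambda>x. ennreal (if x < t then A else B)) = ennreal (\<phi> t * A + (1 - \<phi> t) * B)"
proof -
  have E: "{0..<t} \<in> sets Om" "measure Om {0..<t} = t"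
    using assms emeasure_Om_eq_lborel[of "{0..<t}"]
    by (auto simp: sets_restrict_space_iff measure_def atLeastLessThan_subseteq_atLeastAtMost_iff)
  have E_Mplus: "(\<lambda>x. ennreal (A - B) * indicator {0..<t} x) \<in> Mplus"
    using E(1) by (simp add: Mplus_def)
  have two_Mplus: "(\<lambda>x. ennreal (if x < t then A else B)) \<in> Mplus"
    unfolding Mplus_def by (intro borel_measurable_Om) measurable
  have "AE x in Om. ennreal (if x < t then A else B) = ennreal (A - B) * indicator {0..<t} x + ennreal B"
    using assms by (intro AE_I2) (auto simp: indicator_def simp flip: ennreal_plus)
  then have "R (\<lambda>x. ennreal (if x < t then A else B)) = R (\<lambda>x. ennreal (A - B) * indicator {0..<t} x + ennreal B)"
    using E_Mplus two_Mplus by (intro R_cong_AE) (auto simp: Mplus_def)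
  also have "\<dots> = ennreal (A - B) * ennreal (\<phi> t) + ennreal B"
    using assms E E_Mplus fundamental
    by (simp add: R_add_const function_norm_mult_const[OF banach_function_norm] Mplus_def
        has_fundamental_function_def)
  also have "\<dots> = ennreal ((A - B) * \<phi> t + B)"
    using assms phi_range by (simp add: ennreal_mult[symmetric] ennreal_plus[symmetric] del: ennreal_plus)
  also have "(A - B) * \<phi> t + B = \<phi> t * A + (1 - \<phi> t) * B"
    by (simp add: algebra_simps)
  finally show ?thesis .
qed

lemma R_two_blocks_lower_bound:
  fixes u v :: "nat \<Rightarrow> real"
  assumes t: "0 < t" "t < 1" and n: "0 < n"
    and u: "\<And>j. 0 \<le> u j" and v: "\<And>j. 0 \<le> v j" and uv: "(\<Sum>j<n. v j) \<le> (\<Sum>j<n. u j)"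
  shows "ennreal (\<phi> t * ((\<Sum>j<n. u j) / real n) + (1 - \<phi> t) * ((\<Sum>j<n. v j) / real n))
    \<le> R (\<lambda>x. ennreal (step_fun 0 t n u x + step_fun t (1 - t) n v x))"
proof -
  define S where "S k x = ennreal (step_fun 0 t n (\<lambda>j. u ((j + k) mod n)) x
    + step_fun t (1 - t) n (\<lambda>j. v ((j + k) mod n)) x)" for k x
  have S_Mplus: "S k \<in> Mplus" for k
    unfolding S_def Mplus_def by (intro borel_measurable_Om) measurable
  have "distr_fun (S k) l = (\<Sum>j<n. if l < u j then ennreal (t / real n) else 0)
      + (\<Sum>j<n. if l < v j then ennreal ((1 - t) / real n) else 0)" if "0 \<le> l" for k l
    using distr_fun_two_blocks[OF t n that, of "\<lambda>j. u ((j + k) mod n)" "\<lambda>j. v ((j + k) mod n)"]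
      sum_lessThan_cyclic_shift[OF n, of "\<lambda>i. if l < u i then ennreal (t / real n) else 0" k]
      sum_lessThan_cyclic_shift[OF n, of "\<lambda>i. if l < v i then ennreal ((1 - t) / real n) else 0" k]
    unfolding S_def[abs_def] by simp
  then have "R (S k) = R (S 0)" for k
    by (intro R_cong S_Mplus) simp
  then have "R (\<lambda>x. \<Sum>k<n. ennreal (1 / real n) * S k x) \<le> R (S 0)"
    by (intro function_norm_average_le[OF banach_function_norm] n S_Mplus eq_refl)
  moreover have "S 0 = (\<lambda>x. ennreal (step_fun 0 t n u x + step_fun t (1 - t) n v x))"
    by (simp add: S_def[abs_def] step_fun_mod)
  moreover have "R (\<lambda>x. \<Sum>k<n. ennreal (1 / real n) * S k x)
      = R (\<lambda>x. ennreal (if x < t then (\<Sum>j<n. u j) / real n else (\<Sum>j<n. v j) / real n))"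
  proof (rule R_cong_AE)
    have "(\<Sum>k<n. ennreal (1 / real n) * S k x)
        = ennreal (if x < t then (\<Sum>j<n. u j) / real n else (\<Sum>j<n. v j) / real n)"
      if "0 \<le> x" "x < 1" for x
      unfolding S_def using average_cyclic_shifts_two_blocks[OF t n, where u=u and v=v] u v that by simp
    then show "AE x in Om. (\<Sum>k<n. ennreal (1 / real n) * S k x)
        = ennreal (if x < t then (\<Sum>j<n. u j) / real n else (\<Sum>j<n. v j) / real n)"
      by (intro AE_mp[OF AE_Om_neq[of 1] AE_I2]) auto
  qed (use S_Mplus in \<open>auto simp: Mplus_def intro!: borel_measurable_Om\<close>)
  moreover have "0 \<le> (\<Sum>j<n. v j) / real n" "(\<Sum>j<n. v j) / real n \<le> (\<Sum>j<n. u j) / real n"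
    using v uv by (simp_all add: sum_nonneg divide_right_mono)
  ultimately show ?thesis
    using t by (simp add: R_two_values)
qed

lemma TM_at_le_R_plus:
  fixes f :: "real \<Rightarrow> real"
  assumes t: "0 < t" "t < 1" and n: "0 < n"
    and "antimono f" and f0: "\<And>x. 0 \<le> f x" and f: "f \<in> borel_measurable borel"
  shows "TM_at \<phi> (\<lambda>w. ennreal (f w)) t \<le> R (\<lambda>w. ennreal (f w)) + ennreal (f 0 / real n)"
proof -
  have t': "0 < 1 - t" using t by simp
  define u v where "u j = f (0 + real (Suc j) * t / real n)" and "v j = f (t + real (Suc j) * (1 - t) / real n)" for j
  define SU SV where "SU = (\<Sum>j<n. u j)" and "SV = (\<Sum>j<n. v j)"
  have "v j \<le> u j" if "j < n" for j
  proof -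
    have "0 + real (Suc j) * t / real n \<le> t"
      using that t n by (simp add: divide_le_eq mult.commute mult_left_mono)
    moreover have "t \<le> t + real (Suc j) * (1 - t) / real n"
      using t by simp
    ultimately show ?thesis
      unfolding u_def v_def using antimonoD[OF \<open>antimono f\<close>] by (meson order_trans)
  qed
  then have SV: "0 \<le> SV" "SV \<le> SU"
    unfolding SU_def SV_def using f0 by (auto intro: sum_nonneg sum_mono simp: v_def)
  have "(\<integral>\<^sup>+w\<in>{0..t}. ennreal (f w) \<partial>lborel) \<le> ennreal (t * ((f 0 + SU) / real n))"
    using nn_integral_antimono_le_sum[OF t(1) n \<open>antimono f\<close> f0, of 0] by (simp add: SU_def u_def)
  moreover have "(\<integral>\<^sup>+w\<in>{t..1}. ennreal (f w) \<partial>lborel) \<le> ennreal ((1 - t) * ((f 0 + SV) / real n))"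
  proof -
    have "(\<integral>\<^sup>+w\<in>{t..1}. ennreal (f w) \<partial>lborel) \<le> ennreal ((1 - t) * ((f t + SV) / real n))"
      using nn_integral_antimono_le_sum[OF t' n \<open>antimono f\<close> f0, of t] by (simp add: SV_def v_def)
    also have "\<dots> \<le> ennreal ((1 - t) * ((f 0 + SV) / real n))"
      using antimonoD[OF \<open>antimono f\<close>, of 0 t] t by (intro ennreal_leI mult_left_mono divide_right_mono) auto
    finally show ?thesis .
  qed
  ultimately have "TM_at \<phi> (\<lambda>w. ennreal (f w)) t
      \<le> ennreal (\<phi> t * ((f 0 + SU) / real n) + (1 - \<phi> t) * ((f 0 + SV) / real n))"
    using f0[of 0] SV by (intro TM_at_le_averages t) auto
  also have "\<phi> t * ((f 0 + SU) / real n) + (1 - \<phi> t) * ((f 0 + SV) / real n)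
      = (\<phi> t * (SU / real n) + (1 - \<phi> t) * (SV / real n)) + f 0 / real n"
    by (simp add: algebra_simps add_divide_distrib[symmetric])
  also have "ennreal \<dots> = ennreal (\<phi> t * (SU / real n) + (1 - \<phi> t) * (SV / real n)) + ennreal (f 0 / real n)"
    using f0[of 0] SV phi_range t by (intro ennreal_plus) auto
  also have "\<dots> \<le> R (\<lambda>x. ennreal (step_fun 0 t n u x + step_fun t (1 - t) n v x)) + ennreal (f 0 / real n)"
    unfolding SU_def SV_def using SV f0
    by (intro add_right_mono R_two_blocks_lower_bound t n) (auto simp: SU_def SV_def u_def v_def)
  also have "R (\<lambda>x. ennreal (step_fun 0 t n u x + step_fun t (1 - t) n v x)) \<le> R (\<lambda>w. ennreal (f w))"
  proof (intro function_norm_mono[OF banach_function_norm] AE_I2 ennreal_leI)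
    show "step_fun 0 t n u x + step_fun t (1 - t) n v x \<le> f x" for x
      using step_fun_right_endpoints_le[OF t(1) n \<open>antimono f\<close> f0, of 0 x]
        step_fun_right_endpoints_le[OF t' n \<open>antimono f\<close> f0, of t x]
        step_fun_outside[OF t(1) n, of x 0 u] step_fun_outside[OF t' n, of x t v]
      unfolding u_def v_def by (cases "x < t") auto
  qed (use f in \<open>auto simp: Mplus_def intro!: borel_measurable_Om\<close>)
  finally show ?thesis by (simp add: add_right_mono)
qed

lemma TM_at_le_R_antimono:
  fixes f :: "real \<Rightarrow> real"
  assumes t: "0 < t" "t < 1" and "antimono f" and "\<And>x. 0 \<le> f x" and "f \<in> borel_measurable borel"
  shows "TM_at \<phi> (\<lambda>w. ennreal (f w)) t \<le> R (\<lambda>w. ennreal (f w))"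
proof (rule ennreal_le_epsilon)
  fix e :: real assume "0 < e"
  then obtain n :: nat where n: "f 0 < real n * e" using ex_less_of_nat_mult by blast
  with \<open>0 < e\<close> assms(4)[of 0] have "0 < n" "f 0 / real n \<le> e"
    by (auto simp: divide_le_eq mult.commute intro!: Nat.gr0I)
  then show "TM_at \<phi> (\<lambda>w. ennreal (f w)) t \<le> R (\<lambda>w. ennreal (f w)) + ennreal e"
    using TM_at_le_R_plus[OF t _ assms(3-5)] by (meson add_left_mono ennreal_leI order_trans)
qed

lemma TM_at_truncated_rearr_le_R:
  assumes Z: "Z \<in> Mplus" and t: "0 < t" "t < 1"
  shows "TM_at \<phi> (\<lambda>w. min (rearr Z w) (of_nat i)) t \<le> R Z"
proof -
  define f where "f w = enn2real (min (rearr Z w) (of_nat i))" for w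
  have trunc: "min (rearr Z w) (of_nat i) = ennreal (f w)" for w
  proof -
    have "min (rearr Z w) (of_nat i) < top"
      by (rule min.strict_coboundedI2) (simp add: of_nat_less_top)
    then show ?thesis unfolding f_def by simp
  qed
  have f_meas: "f \<in> borel_measurable borel"
    unfolding f_def using borel_measurable_rearr[OF Z] by measurable
  have f_nonneg: "0 \<le> f w" for w
    by (simp add: f_def)
  have "antimono f"
  proof (rule antimonoI)
    fix x y :: real assume "x \<le> y"
    then have "ennreal (f y) \<le> ennreal (f x)"
      unfolding trunc[symmetric] using antimonoD[OF rearr_antimono] by (intro min.mono) auto
    then show "f y \<le> f x" by (simp add: f_def)
  qed
  then have "TM_at \<phi> (\<lambda>w. ennreal (f w)) t \<le> R (\<lambda>w. ennreal (f w))"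
    by (intro TM_at_le_R_antimono t f_meas f_nonneg)
  also have "R (\<lambda>w. ennreal (f w)) \<le> R (rearr Z)"
  proof (intro function_norm_mono[OF banach_function_norm] AE_I2)
    show "ennreal (f x) \<le> rearr Z x" for x
      unfolding trunc[symmetric] by simp
  qed (use f_meas rearr_in_Mplus[OF Z] in \<open>auto simp: Mplus_def intro!: borel_measurable_Om\<close>)
  finally show ?thesis
    using R_rearr[OF Z] by (simp add: trunc)
qed

lemma TM_norm_le_R:
  assumes Z: "Z \<in> Mplus"
  shows "TM_norm \<phi> Z \<le> R Z"
  unfolding TM_norm_eq_SUP_TM_at
proof (rule SUP_least)
  fix t :: real assume "t \<in> {0<..<1}"
  then have t: "0 < t" "t < 1" by auto
  have "(\<lambda>w. min (rearr Z w) (of_nat i)) \<in> borel_measurable borel" for i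
    using borel_measurable_rearr[OF Z] by measurable
  moreover have "incseq (\<lambda>i. min (rearr Z w) (of_nat i))" for w
    unfolding incseq_def by (intro allI impI min.mono) auto
  ultimately have "TM_at \<phi> (rearr Z) t = (SUP i. TM_at \<phi> (\<lambda>w. min (rearr Z w) (of_nat i)) t)"
    using TM_at_SUP[of "\<lambda>i w. min (rearr Z w) (of_nat i)"] by (simp add: SUP_min_of_nat_ennreal)
  also have "\<dots> \<le> R Z"
    by (intro SUP_least TM_at_truncated_rearr_le_R Z t)
  finally show "TM_at \<phi> (rearr Z) t \<le> R Z" .
qed

end

theorem theorem19:
  fixes \<phi> :: "real \<Rightarrow> real"
  assumes "\<forall>t\<in>{0..1}. \<phi> t \<in> {0..1}"
    and "concave_on {0..1} \<phi>"
    and "\<phi> 0 = 0" and "\<phi> 1 = 1"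
  shows "PTE (TM_norm \<phi>) \<and> ri_function_norm (TM_norm \<phi>) \<and> has_fundamental_function (TM_norm \<phi>) \<phi>
    \<and> (\<forall>R. PTE R \<and> ri_function_norm R \<and> has_fundamental_function R \<phi> \<longrightarrow>
         (\<forall>X::real \<Rightarrow> real. X \<in> borel_measurable Om \<and> R (\<lambda>x. ennreal \<bar>X x\<bar>) < \<infinity> \<longrightarrow>
            M_norm \<phi> (\<lambda>x. ennreal \<bar>X x\<bar>) \<le> TM_norm \<phi> (\<lambda>x. ennreal \<bar>X x\<bar>)
          \<and> TM_norm \<phi> (\<lambda>x. ennreal \<bar>X x\<bar>) \<le> R (\<lambda>x. ennreal \<bar>X x\<bar>)))"
proof -
  interpret concave_fundamental \<phi>
    using assms by unfold_locales
  have minimal: "M_norm \<phi> (\<lambda>x. ennreal \<bar>X x\<bar>) \<le> TM_norm \<phi> (\<lambda>x. ennreal \<bar>X x\<bar>)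
      \<and> TM_norm \<phi> (\<lambda>x. ennreal \<bar>X x\<bar>) \<le> R (\<lambda>x. ennreal \<bar>X x\<bar>)"
    if "PTE R" "ri_function_norm R" "has_fundamental_function R \<phi>" "X \<in> borel_measurable Om" for R X
  proof -
    interpret PTE_ri_norm \<phi> R
      using that by unfold_locales
    have "(\<lambda>x. ennreal \<bar>X x\<bar>) \<in> Mplus"
      using that(4) unfolding Mplus_def by measurable
    then show ?thesis
      using M_norm_le_TM_norm TM_norm_le_R by blast
  qed
  show ?thesis
    using PTE_TM_norm ri_function_norm_TM_norm has_fundamental_function_TM_norm minimal by blast
qed

end
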